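(* Let $\kappa_*>0$ and $0<L<U<\infty$, and let $H^*$ be a probability measure on $[L,U]$. Suppose $X_1,\dots,X_n$ are generated by $X_i\mid\theta_i\overset{ind}{\sim}\mathrm{Poi}(\theta_i)$, $\theta_i\mid\lambda_i\overset{ind}{\sim}\mathrm{Gamma}(\kappa_*,\lambda_i)$ (shape-rate), $\lambda_i\overset{iid}{\sim}H^*$. Let $\widehat H_n$ be any maximizer $\widehat H_n\in\arg\max_{H\in\mathcal P([L,U])}\sum_{i=1}^n\log f_H(X_i)$. Then there exists $\alpha_*\in(0,1/2)$, depending only on $(L,U)$, such that $$\mathbb E_{H^*}\big[\mathrm{TV}(g_{\widehat H_n},g_{H^*})\big]\le C\,n^{-\alpha_*}(\log n)^{(1-\kappa_* )_++\alpha_*},$$ where $C>0$ depends only on $(\kappa_*,L,U)$.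
   Context: For $H$ a probability measure on $(0,\infty)$: $f_H(x)=\int\frac{\Gamma(x+\kappa_* )}{x!\,\Gamma(\kappa_* )}\left(\frac{1}{\lambda+1}\right)^x\left(\frac{\lambda}{\lambda+1}\right)^{\kappa_*}dH(\lambda)$, $x\in\mathbb Z_+$ (marginal pmf of $X_i$), and $g_H(\theta)=\int\frac{\lambda^{\kappa_*}}{\Gamma(\kappa_* )}\theta^{\kappa_*-1}e^{-\lambda\theta}\,dH(\lambda)$, $\theta>0$ (the Gamma-mixture prior density of $\theta_i$; $g_{\widehat H_n}$ is called the smooth NPMLE). $\mathrm{TV}(g,g')=\frac12\int_0^\infty|g(\theta)-g'(\theta)|\,d\theta$. $(t)_+=\max(t,0)$. $\mathcal P(A)$ is the set of probability measures on $A$; $\mathbb E_{H^*}$ is expectation under the model with $\lambda_i\sim H^*$. *)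

theory Defs
  imports "HOL-Probability.Probability"
begin

definition prob_on :: "real \<Rightarrow> real \<Rightarrow> real measure \<Rightarrow> bool" where
  "prob_on L U H \<longleftrightarrow> prob_space H \<and> sets H = sets borel \<and> (AE l in H. l \<in> {L..U})"

definition fH :: "real \<Rightarrow> real measure \<Rightarrow> nat \<Rightarrow> real" where
  "fH \<kappa> H x = (\<integral>l. Gamma (real x + \<kappa>) / (fact x * Gamma \<kappa>)
      * (1 / (l + 1)) ^ x * (l / (l + 1)) powr \<kappa> \<partial>H)"

definition gH :: "real \<Rightarrow> real measure \<Rightarrow> real \<Rightarrow> real" where
  "gH \<kappa> H \<theta> = (\<integral>l. l powr \<kappa> / Gamma \<kappa> * \<theta> powr (\<kappa> - 1) * exp (- l * \<theta>) \<partial>H)"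

definition TV :: "(real \<Rightarrow> real) \<Rightarrow> (real \<Rightarrow> real) \<Rightarrow> real" where
  "TV g g' = 1/2 * (LINT \<theta>:{0<..}|lborel. \<bar>g \<theta> - g' \<theta>\<bar>)"

definition loglik :: "real \<Rightarrow> real measure \<Rightarrow> nat list \<Rightarrow> real" where
  "loglik \<kappa> H xs = (\<Sum>i<length xs. ln (fH \<kappa> H (xs ! i)))"

definition is_npmle :: "real \<Rightarrow> real \<Rightarrow> real \<Rightarrow> nat list \<Rightarrow> real measure \<Rightarrow> bool" where
  "is_npmle \<kappa> L U xs Hh \<longleftrightarrow> prob_on L U Hh \<and>
     (\<forall>H. prob_on L U H \<longrightarrow> loglik \<kappa> H xs \<le> loglik \<kappa> Hh xs)"

text \<open>Expectation under the model with lambda_i iid H*: the X_i are iid with pmf f_{H*},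
so the expectation of a function of (X_1,...,X_n) is a countable sum.\<close>
definition expect_data :: "real \<Rightarrow> real measure \<Rightarrow> nat \<Rightarrow> (nat list \<Rightarrow> real) \<Rightarrow> real" where
  "expect_data \<kappa> Hs n F = infsum (\<lambda>xs. (\<Prod>i<n. fH \<kappa> Hs (xs ! i)) * F xs) {xs. length xs = n}"

end

(*
  Since the NPMLE has at least the likelihood of H*, the inequality ln x <= x - 1 bounds the
  squared Hellinger distance between f_Hhat and f_H* by a weighted l1 distance between the
  empirical pmf and f_H*, whose expectation is O(n^(-1/2)). So f_Hhat is uniformly eps-close
  to f_H*, with eps^2 of order n^(-1/2).

  To pass from the pmf to the prior density, write s = lambda/(lambda+1). Then
  lambda^kappa e^(-lambda theta) = s^kappa psi(s) with psi(z) = (1-z)^(-kappa) e^(-theta z/(1-z))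
  holomorphic in the unit disc. A Taylor polynomial of psi of degree k, with Cauchy estimates
  for its coefficients, expresses g_H(theta) through the moments of s^(kappa+j) under H, which
  are binomial combinations of f_H(0), ..., f_H(j). This gives
  |g_Hhat - g_H*|(theta) <~ e^theta (rho^k eps + q^k) with q < 1. Interpolating with the trivial
  bound e^(-L theta), integrating in theta and taking k ~ log n / (8 log rho) yields the rate
  n^(-alpha) with alpha depending only on L and U.
*)
theory Submission
  imports Defs "HOL-Complex_Analysis.Cauchy_Integral_Formula"
begin

lemma holomorphic_taylor_coeff_bound:
  fixes f :: "complex \<Rightarrow> complex"
  assumes hol: "f holomorphic_on ball 0 R" and r: "0 < r" "r < R"
    and bd: "\<And>z. norm z = r \<Longrightarrow> norm (f z) \<le> M"
  shows "norm ((deriv ^^ j) f 0 / fact j) \<le> M / r ^ j"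
proof -
  have "f holomorphic_on cball 0 r"
    using r by (intro holomorphic_on_subset[OF hol]) auto
  then have "norm ((deriv ^^ j) f 0) \<le> fact j * M / r ^ j"
    using r(1) bd by (intro Cauchy_inequality)
      (auto intro: holomorphic_on_subset holomorphic_on_imp_continuous_on)
  then show ?thesis by (simp add: norm_divide field_simps)
qed

lemma holomorphic_taylor_remainder_bound:
  fixes f :: "complex \<Rightarrow> complex"
  assumes hol: "f holomorphic_on ball 0 R" and r: "0 < r" "r < R"
    and bd: "\<And>z. norm z = r \<Longrightarrow> norm (f z) \<le> M"
    and z: "norm z \<le> s" and s: "s < r"
  shows "norm (f z - (\<Sum>j<k. (deriv ^^ j) f 0 / fact j * z ^ j)) \<le> M * (s / r) ^ k / (1 - s / r)"
proof -
  define c where "c j = (deriv ^^ j) f 0 / fact j" for j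
  have cb: "norm (c j) \<le> M / r ^ j" for j
    unfolding c_def by (rule holomorphic_taylor_coeff_bound[OF hol r bd])
  have M0: "0 \<le> M"
    using bd[of "of_real r"] r by (auto intro: order_trans[OF norm_ge_zero])
  have s0: "0 \<le> s" using z by (rule order_trans[OF norm_ge_zero])
  have "(\<lambda>j. c j * z ^ j) sums f z"
    using holomorphic_power_series[OF hol, of z] z s r by (simp add: c_def)
  from sums_split_initial_segment[OF this, of k]
  have tail: "(\<lambda>i. c (i + k) * z ^ (i + k)) sums (f z - (\<Sum>j<k. c j * z ^ j))"
    by simp
  have "0 \<le> s / r" "s / r < 1" using s0 s r by auto
  then have geo: "(\<lambda>i. M * (s / r) ^ k * (s / r) ^ i) sums (M * (s / r) ^ k * (1 / (1 - s / r)))"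
    by (intro sums_mult geometric_sums) auto
  have "norm (c (i + k) * z ^ (i + k)) \<le> M * (s / r) ^ k * (s / r) ^ i" for i
  proof -
    have "norm (c (i + k) * z ^ (i + k)) \<le> M / r ^ (i + k) * s ^ (i + k)"
      unfolding norm_mult norm_power using cb z M0 r by (intro mult_mono power_mono) auto
    also have "\<dots> = M * (s / r) ^ k * (s / r) ^ i"
      by (simp add: power_add power_divide field_simps)
    finally show ?thesis .
  qed
  from norm_suminf_le[OF this sums_summable[OF geo]] show ?thesis
    using sums_unique[OF tail] sums_unique[OF geo] by (simp add: c_def)
qed

definition psi :: "real \<Rightarrow> real \<Rightarrow> complex \<Rightarrow> complex" where
  "psi \<kappa> \<theta> z = (1 - z) powr (- of_real \<kappa>) * exp (- of_real \<theta> * z / (1 - z))"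

lemma psi_holomorphic: "psi \<kappa> \<theta> holomorphic_on ball 0 1"
proof -
  have re: "Re (1 - z) > 0" if "z \<in> ball 0 1" for z
    using that complex_Re_le_cmod[of z] by (auto simp: dist_norm)
  show ?thesis
    unfolding psi_def
  proof (intro holomorphic_intros)
    fix z :: complex assume "z \<in> ball 0 1"
    from re[OF this] show "1 - z \<notin> \<real>\<^sub>\<le>\<^sub>0" "1 - z \<noteq> 0"
      by (auto simp: nonpos_Reals_def dest!: arg_cong[where f=Re])
  qed
qed

lemma norm_psi_le:
  assumes "0 \<le> \<kappa>" "0 \<le> \<theta>" "norm z = r" "r < 1"
  shows "norm (psi \<kappa> \<theta> z) \<le> (1 - r) powr (- \<kappa>) * exp \<theta>"
proof -
  have n1: "1 - r \<le> norm (1 - z)"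
    using norm_triangle_ineq2[of 1 z] assms by (simp add: norm_minus_commute)
  then have nz: "1 - z \<noteq> 0" using assms by auto
  have "norm ((1 - z) powr (- of_real \<kappa>)) = norm (1 - z) powr (- \<kappa>)"
    by (subst norm_powr_real_powr') auto
  also have "\<dots> \<le> (1 - r) powr (- \<kappa>)"
    using n1 assms by (intro powr_mono2') auto
  finally have A: "norm ((1 - z) powr (- of_real \<kappa>)) \<le> (1 - r) powr (- \<kappa>)" .
  have "Re (1 - z) \<ge> 0" using complex_Re_le_cmod[of z] assms by simp
  then have "Re (1 / (1 - z)) \<ge> 0" by (simp add: Re_divide divide_nonneg_pos)
  moreover have "z / (1 - z) = 1 / (1 - z) - 1" using nz by (simp add: field_simps)
  ultimately have "Re (z / (1 - z)) \<ge> -1" by simp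
  then have "\<theta> * (-1) \<le> \<theta> * Re (z / (1 - z))" using assms(2) by (intro mult_left_mono) auto
  then have "Re (- of_real \<theta> * z / (1 - z)) \<le> \<theta>"
    by (simp add: mult.assoc[symmetric] times_divide_eq_right[symmetric] del: times_divide_eq_right)
  then have B: "norm (exp (- of_real \<theta> * z / (1 - z))) \<le> exp \<theta>" by simp
  show ?thesis unfolding psi_def norm_mult by (rule mult_mono[OF A B]) auto
qed

lemma psi_of_real:
  assumes "s < 1"
  shows "psi \<kappa> \<theta> (of_real s) = of_real ((1 - s) powr (- \<kappa>) * exp (- \<theta> * s / (1 - s)))"
proof -
  have "(1 - complex_of_real s) powr (- of_real \<kappa>) = of_real ((1 - s) powr (- \<kappa>))"
    using powr_of_real[of "1 - s" "- \<kappa>"] assms by simp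
  moreover have "exp (- of_real \<theta> * of_real s / (1 - of_real s)) = (of_real (exp (- \<theta> * s / (1 - s))) :: complex)"
    by (simp flip: exp_of_real)
  ultimately show ?thesis unfolding psi_def by simp
qed

lemma psi_real_poly_approx:
  fixes \<kappa> \<theta> r s\<^sub>0 :: real
  assumes "0 \<le> \<kappa>" "0 \<le> \<theta>" "0 < r" "r < 1" "s\<^sub>0 < r"
  defines "M \<equiv> (1 - r) powr (- \<kappa>) * exp \<theta>"
  obtains d :: "nat \<Rightarrow> real" where "\<And>j. \<bar>d j\<bar> \<le> M / r ^ j"
    and "\<And>s. 0 \<le> s \<Longrightarrow> s \<le> s\<^sub>0 \<Longrightarrow>
      \<bar>(1 - s) powr (- \<kappa>) * exp (- \<theta> * s / (1 - s)) - (\<Sum>j<k. d j * s ^ j)\<bar>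
        \<le> M * (s\<^sub>0 / r) ^ k / (1 - s\<^sub>0 / r)"
proof
  define c where "c j = (deriv ^^ j) (psi \<kappa> \<theta>) 0 / fact j" for j
  have bd: "norm (psi \<kappa> \<theta> z) \<le> M" if "norm z = r" for z
    unfolding M_def using assms that by (intro norm_psi_le) auto
  show "\<bar>Re (c j)\<bar> \<le> M / r ^ j" for j
    using abs_Re_le_cmod[of "c j"] holomorphic_taylor_coeff_bound[OF psi_holomorphic assms(3,4) bd]
    unfolding c_def by (meson order_trans)
  fix s :: real assume s: "0 \<le> s" "s \<le> s\<^sub>0"
  define X where "X = psi \<kappa> \<theta> (of_real s) - (\<Sum>j<k. c j * of_real s ^ j)"
  have "norm X \<le> M * (s\<^sub>0 / r) ^ k / (1 - s\<^sub>0 / r)"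
    unfolding X_def c_def using s assms
    by (intro holomorphic_taylor_remainder_bound[OF psi_holomorphic assms(3,4) bd]) auto
  moreover have "Re X = (1 - s) powr (- \<kappa>) * exp (- \<theta> * s / (1 - s)) - (\<Sum>j<k. Re (c j) * s ^ j)"
    unfolding X_def using s assms by (simp add: psi_of_real Re_sum flip: of_real_power)
  ultimately show "\<bar>(1 - s) powr (- \<kappa>) * exp (- \<theta> * s / (1 - s)) - (\<Sum>j<k. Re (c j) * s ^ j)\<bar>
      \<le> M * (s\<^sub>0 / r) ^ k / (1 - s\<^sub>0 / r)"
    using abs_Re_le_cmod[of X] by linarith
qed

definition nb_coeff :: "real \<Rightarrow> nat \<Rightarrow> real" where
  "nb_coeff \<kappa> x = Gamma (real x + \<kappa>) / (fact x * Gamma \<kappa>)"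

lemma nb_coeff_pochhammer: "\<kappa> > 0 \<Longrightarrow> nb_coeff \<kappa> x = pochhammer \<kappa> x / fact x"
proof -
  assume k: "\<kappa> > 0"
  then have "\<kappa> \<notin> \<int>\<^sub>\<le>\<^sub>0" by (auto elim!: nonpos_Ints_cases)
  then have "pochhammer \<kappa> x = Gamma (\<kappa> + real x) / Gamma \<kappa>" by (rule pochhammer_Gamma)
  then show ?thesis unfolding nb_coeff_def by (simp add: add.commute field_simps)
qed

lemma nb_coeff_pos: "\<kappa> > 0 \<Longrightarrow> nb_coeff \<kappa> x > 0"
  by (simp add: nb_coeff_pochhammer pochhammer_pos)

lemma nb_coeff_Suc: "\<kappa> > 0 \<Longrightarrow> nb_coeff \<kappa> (Suc x) = nb_coeff \<kappa> x * (\<kappa> + x) / (x + 1)"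
  by (simp add: nb_coeff_pochhammer pochhammer_Suc field_simps)

lemma nb_coeff_lower:
  assumes "\<kappa> > 0"
  shows "min \<kappa> 1 / (x + 1) \<le> nb_coeff \<kappa> x"
proof -
  have pos: "min \<kappa> 1 / Suc y \<le> nb_coeff \<kappa> (Suc y)" for y
  proof (induction y)
    case 0
    then show ?case using assms by (simp add: nb_coeff_pochhammer)
  next
    case (Suc y)
    have "min \<kappa> 1 / Suc (Suc y) = min \<kappa> 1 / Suc y * (Suc y / (Suc y + 1))"
      by (simp only: times_divide_times_eq) (simp add: divide_simps)
    also have "\<dots> \<le> nb_coeff \<kappa> (Suc y) * ((\<kappa> + Suc y) / (Suc y + 1))"
      using Suc assms nb_coeff_pos[OF assms, of "Suc y"]
      by (intro mult_mono divide_right_mono) auto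
    also have "\<dots> = nb_coeff \<kappa> (Suc (Suc y))"
      using assms by (simp add: nb_coeff_Suc[of _ "Suc y"])
    finally show ?case .
  qed
  show ?thesis
  proof (cases x)
    case 0
    then show ?thesis using assms by (simp add: nb_coeff_pochhammer)
  next
    case (Suc y)
    have "min \<kappa> 1 / (x + 1) \<le> min \<kappa> 1 / Suc y"
      using Suc assms by (intro divide_left_mono) auto
    then show ?thesis using pos[of y] Suc by simp
  qed
qed

lemma nb_coeff_sums:
  assumes "\<kappa> > 0" "0 \<le> t" "t < 1"
  shows "(\<lambda>x. nb_coeff \<kappa> x * t ^ x) sums (1 - t) powr (- \<kappa>)"
proof -
  have "(\<lambda>n. ((- \<kappa>) gchoose n) * (- t) ^ n) sums (1 + (- t)) powr (- \<kappa>)"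
    using assms by (intro gen_binomial_real) auto
  moreover have "((- \<kappa>) gchoose n) * (- t) ^ n = nb_coeff \<kappa> n * t ^ n" for n
    using assms
    by (simp add: gbinomial_pochhammer nb_coeff_pochhammer power_mult_distrib[symmetric] field_simps)
  ultimately show ?thesis by simp
qed

definition sfun :: "real \<Rightarrow> real" where "sfun l = l / (l + 1)"
definition tfun :: "real \<Rightarrow> real" where "tfun l = 1 / (l + 1)"

definition nb_moment :: "real \<Rightarrow> real measure \<Rightarrow> nat \<Rightarrow> real" where
  "nb_moment \<kappa> H x = (\<integral>l. tfun l ^ x * sfun l powr \<kappa> \<partial>H)"

lemma fH_eq_nb_moment: "fH \<kappa> H x = nb_coeff \<kappa> x * nb_moment \<kappa> H x"
  unfolding fH_def nb_moment_def nb_coeff_def sfun_def tfun_def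
  by (subst integral_mult_right_zero[symmetric]) (simp add: mult.assoc)

lemma borel_measurable_nb_kernel [measurable]:
  "(\<lambda>l. tfun l ^ x * sfun l powr \<kappa>) \<in> borel_measurable borel"
  unfolding sfun_def tfun_def by measurable

lemma nb_kernel_sums_one:
  assumes "\<kappa> > 0" "l > 0"
  shows "(\<lambda>x. nb_coeff \<kappa> x * (tfun l ^ x * sfun l powr \<kappa>)) sums 1"
proof -
  have "0 \<le> tfun l" "tfun l < 1" using assms by (auto simp: tfun_def)
  then have "(\<lambda>x. nb_coeff \<kappa> x * tfun l ^ x * sfun l powr \<kappa>)
      sums ((1 - tfun l) powr (- \<kappa>) * sfun l powr \<kappa>)"
    by (intro sums_mult2 nb_coeff_sums assms)
  moreover have "1 - tfun l = sfun l" "sfun l > 0"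
    using assms by (auto simp: sfun_def tfun_def field_simps)
  ultimately show ?thesis by (simp add: powr_minus mult.assoc)
qed

subsection \<open>Probability measures on an interval\<close>

lemma prob_onD:
  assumes "prob_on L U H"
  shows "prob_space H" "sets H = sets borel" "AE l in H. l \<in> {L..U}" "space H = UNIV"
  using assms unfolding prob_on_def by (auto dest: sets_eq_imp_space_eq)

lemma prob_on_integrable_bounded:
  fixes f :: "real \<Rightarrow> real"
  assumes H: "prob_on L U H" and f: "f \<in> borel_measurable borel"
    and b: "\<And>l. L \<le> l \<Longrightarrow> l \<le> U \<Longrightarrow> \<bar>f l\<bar> \<le> B"
  shows "integrable H f"
proof -
  interpret prob_space H using prob_onD[OF H] by simp
  have fm: "f \<in> borel_measurable H" using f prob_onD(2)[OF H] by (simp cong: measurable_cong_sets)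
  have ae: "AE x in H. norm (f x) \<le> norm B"
    using prob_onD(3)[OF H] by eventually_elim (use b in force)
  show ?thesis by (rule Bochner_Integration.integrable_bound[OF integrable_const fm ae])
qed

lemma prob_on_integral_mono:
  fixes f g :: "real \<Rightarrow> real"
  assumes H: "prob_on L U H" and "integrable H f" "integrable H g"
    and b: "\<And>l. L \<le> l \<Longrightarrow> l \<le> U \<Longrightarrow> f l \<le> g l"
  shows "integral\<^sup>L H f \<le> integral\<^sup>L H g"
proof -
  have "AE l in H. f l \<le> g l" using prob_onD(3)[OF H] by eventually_elim (use b in auto)
  with assms(2,3) show ?thesis by (intro integral_mono_AE)
qed

lemma prob_on_integral_cong:
  fixes f g :: "real \<Rightarrow> real"
  assumes H: "prob_on L U H" and "f \<in> borel_measurable borel" "g \<in> borel_measurable borel"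
    and e: "\<And>l. L \<le> l \<Longrightarrow> l \<le> U \<Longrightarrow> f l = g l"
  shows "integral\<^sup>L H f = integral\<^sup>L H g"
proof (rule integral_cong_AE)
  show "f \<in> borel_measurable H" "g \<in> borel_measurable H"
    using assms(2,3) prob_onD(2)[OF H] by (simp_all cong: measurable_cong_sets)
  show "AE x in H. f x = g x" using prob_onD(3)[OF H] by eventually_elim (use e in auto)
qed

lemma prob_on_integral_bounds:
  fixes f :: "real \<Rightarrow> real"
  assumes H: "prob_on L U H" and f: "f \<in> borel_measurable borel"
    and b: "\<And>l. L \<le> l \<Longrightarrow> l \<le> U \<Longrightarrow> A \<le> f l \<and> f l \<le> B"
  shows "A \<le> integral\<^sup>L H f" "integral\<^sup>L H f \<le> B"
proof -
  interpret prob_space H using prob_onD[OF H] by simp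
  have i: "integrable H f"
  proof (rule prob_on_integrable_bounded[OF H f])
    fix l assume "L \<le> l" "l \<le> U"
    from b[OF this] show "\<bar>f l\<bar> \<le> max \<bar>A\<bar> \<bar>B\<bar>" by linarith
  qed
  have "integral\<^sup>L H (\<lambda>_. A) \<le> integral\<^sup>L H f"
    by (rule prob_on_integral_mono[OF H _ i]) (use b in auto)
  then show "A \<le> integral\<^sup>L H f" by (simp add: prob_space)
  have "integral\<^sup>L H f \<le> integral\<^sup>L H (\<lambda>_. B)"
    by (rule prob_on_integral_mono[OF H i]) (use b in auto)
  then show "integral\<^sup>L H f \<le> B" by (simp add: prob_space)
qed

lemma prob_on_abs_integral_le:
  fixes f :: "real \<Rightarrow> real"
  assumes H: "prob_on L U H" and f: "f \<in> borel_measurable borel"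
    and b: "\<And>l. L \<le> l \<Longrightarrow> l \<le> U \<Longrightarrow> \<bar>f l\<bar> \<le> B"
  shows "\<bar>integral\<^sup>L H f\<bar> \<le> B"
proof -
  have "- B \<le> f l \<and> f l \<le> B" if "L \<le> l" "l \<le> U" for l
    using b[OF that] by (simp add: abs_le_iff)
  from prob_on_integral_bounds[OF H f this] show ?thesis by linarith
qed

subsection \<open>The negative binomial mixture\<close>

locale support_interval =
  fixes L U :: real
  assumes L_pos: "0 < L" and L_less_U: "L < U"
begin

definition "sL = L / (L + 1)"
definition "sU = U / (U + 1)"
definition "tL = 1 / (L + 1)"
definition "tU = 1 / (U + 1)"

lemma st_bounds:
  "0 < sL" "sL < sU" "sU < 1" "0 < tU" "tU < tL" "tL < 1" "sL < 1" "0 < sU" "0 < tL" "tU < 1"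
  using L_pos L_less_U by (auto simp: sL_def sU_def tL_def tU_def field_simps)

lemma sfun_bounds: "L \<le> l \<Longrightarrow> l \<le> U \<Longrightarrow> sL \<le> sfun l \<and> sfun l \<le> sU"
  using L_pos by (auto simp: sL_def sU_def sfun_def field_simps)

lemma tfun_bounds: "L \<le> l \<Longrightarrow> l \<le> U \<Longrightarrow> tU \<le> tfun l \<and> tfun l \<le> tL"
  using L_pos by (auto simp: tL_def tU_def tfun_def field_simps)

lemma one_minus_tfun: "L \<le> l \<Longrightarrow> 1 - tfun l = sfun l"
  using L_pos by (auto simp: sfun_def tfun_def field_simps)

lemma nb_kernel_bounds:
  assumes "0 < \<kappa>" "L \<le> l" "l \<le> U"
  shows "tU ^ x * sL powr \<kappa> \<le> tfun l ^ x * sfun l powr \<kappa>" "tfun l ^ x * sfun l powr \<kappa> \<le> tL ^ x"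
proof -
  note b = tfun_bounds[OF assms(2,3)] sfun_bounds[OF assms(2,3)] st_bounds
  show "tU ^ x * sL powr \<kappa> \<le> tfun l ^ x * sfun l powr \<kappa>"
    using b assms(1) by (intro mult_mono power_mono powr_mono2) auto
  have "tfun l ^ x * sfun l powr \<kappa> \<le> tL ^ x * 1"
    using b assms(1) by (intro mult_mono power_mono) (auto intro!: powr_le1)
  then show "tfun l ^ x * sfun l powr \<kappa> \<le> tL ^ x" by simp
qed

lemma nb_moment_bounds:
  assumes H: "prob_on L U H" and k: "0 < \<kappa>"
  shows "tU ^ x * sL powr \<kappa> \<le> nb_moment \<kappa> H x" "nb_moment \<kappa> H x \<le> tL ^ x"
  using prob_on_integral_bounds[OF H borel_measurable_nb_kernel] nb_kernel_bounds[OF k]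
  unfolding nb_moment_def by blast+

lemma integrable_nb_kernel:
  assumes H: "prob_on L U H" and k: "0 < \<kappa>"
  shows "integrable H (\<lambda>l. tfun l ^ x * sfun l powr \<kappa>)"
proof (rule prob_on_integrable_bounded[OF H borel_measurable_nb_kernel])
  fix l assume l: "L \<le> l" "l \<le> U"
  have "0 \<le> tU ^ x * sL powr \<kappa>" using st_bounds by simp
  with nb_kernel_bounds[OF k l, of x] show "\<bar>tfun l ^ x * sfun l powr \<kappa>\<bar> \<le> tL ^ x" by linarith
qed

lemma fH_bounds:
  assumes H: "prob_on L U H" and k: "0 < \<kappa>"
  shows "nb_coeff \<kappa> x * (tU ^ x * sL powr \<kappa>) \<le> fH \<kappa> H x" "fH \<kappa> H x \<le> nb_coeff \<kappa> x * tL ^ x"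
    "0 < fH \<kappa> H x"
proof -
  have c: "nb_coeff \<kappa> x > 0" by (rule nb_coeff_pos[OF k])
  show l: "nb_coeff \<kappa> x * (tU ^ x * sL powr \<kappa>) \<le> fH \<kappa> H x"
    unfolding fH_eq_nb_moment using nb_moment_bounds[OF H k] c by (intro mult_left_mono) auto
  show "fH \<kappa> H x \<le> nb_coeff \<kappa> x * tL ^ x"
    unfolding fH_eq_nb_moment using nb_moment_bounds[OF H k] c by (intro mult_left_mono) auto
  have "0 < nb_coeff \<kappa> x * (tU ^ x * sL powr \<kappa>)" using c st_bounds by simp
  with l show "0 < fH \<kappa> H x" by linarith
qed

lemma fH_sums:
  assumes H: "prob_on L U H" and k: "0 < \<kappa>"
  shows "fH \<kappa> H sums 1"
proof -
  interpret prob_space H using prob_onD[OF H] by simp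
  define g where "g i l = nb_coeff \<kappa> i * (tfun l ^ i * sfun l powr \<kappa>)" for i l
  have gi: "integrable H (g i)" for i unfolding g_def using integrable_nb_kernel[OF H k] by simp
  have gI: "integral\<^sup>L H (g i) = fH \<kappa> H i" for i unfolding g_def fH_eq_nb_moment nb_moment_def by simp
  have gs: "(\<lambda>i. g i l) sums 1" if "L \<le> l" for l
    unfolding g_def using that L_pos by (intro nb_kernel_sums_one k) auto
  have gn: "0 \<le> g i l" if "L \<le> l" for i l
    using that L_pos nb_coeff_pos[OF k, of i] unfolding g_def tfun_def sfun_def by simp
  have ae: "AE l in H. summable (\<lambda>i. norm (g i l))"
    using prob_onD(3)[OF H] by eventually_elim (use gs gn in \<open>auto intro: sums_summable\<close>)
  have nI: "integral\<^sup>L H (\<lambda>l. norm (g i l)) = fH \<kappa> H i" for i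
  proof -
    have "integral\<^sup>L H (\<lambda>l. norm (g i l)) = integral\<^sup>L H (g i)"
      by (rule integral_cong_AE) (use prob_onD(3)[OF H] gn gi in \<open>auto elim!: eventually_mono\<close>)
    then show ?thesis using gI by simp
  qed
  have fs: "summable (\<lambda>i. fH \<kappa> H i)"
  proof (rule summable_comparison_test'[where g="\<lambda>i. nb_coeff \<kappa> i * tL ^ i"])
    show "summable (\<lambda>i. nb_coeff \<kappa> i * tL ^ i)"
      using nb_coeff_sums[OF k, of tL] st_bounds sums_summable by auto
    show "norm (fH \<kappa> H i) \<le> nb_coeff \<kappa> i * tL ^ i" for i
      using fH_bounds[OF H k, of i] by simp
  qed
  have "(\<lambda>i. integral\<^sup>L H (g i)) sums (\<integral>l. (\<Sum>i. g i l) \<partial>H)"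
    by (rule sums_integral[OF gi ae]) (use fs nI in simp)
  moreover have "(\<integral>l. (\<Sum>i. g i l) \<partial>H) = (\<integral>l. 1 \<partial>H)"
  proof (rule integral_cong_AE)
    have "integrable H (\<lambda>l. \<Sum>i. g i l)" by (rule integrable_suminf[OF gi ae]) (use fs nI in simp)
    then show "(\<lambda>l. \<Sum>i. g i l) \<in> borel_measurable H" by (rule borel_measurable_integrable)
    show "AE l in H. (\<Sum>i. g i l) = 1"
      using prob_onD(3)[OF H] by eventually_elim (metis atLeastAtMost_iff gs sums_unique)
  qed simp
  ultimately show ?thesis using gI by (simp add: prob_space)
qed

lemma fH_le_1:
  assumes H: "prob_on L U H" and k: "0 < \<kappa>"
  shows "fH \<kappa> H x \<le> 1"
proof -
  have "fH \<kappa> H x \<le> (\<Sum>i. fH \<kappa> H i)"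
    using sum_le_suminf[OF sums_summable[OF fH_sums[OF H k]], of "{x}"] fH_bounds(3)[OF H k]
    by (simp add: less_imp_le)
  then show ?thesis using sums_unique[OF fH_sums[OF H k]] by simp
qed

end

subsection \<open>From the pmf to the prior density\<close>

lemma powr_exp_eq_sfun_psi:
  assumes "0 < l"
  shows "l powr \<kappa> * exp (- l * \<theta>)
    = sfun l powr \<kappa> * ((1 - sfun l) powr (- \<kappa>) * exp (- \<theta> * sfun l / (1 - sfun l)))"
proof -
  have e1: "1 - sfun l = 1 / (l + 1)" using assms by (simp add: sfun_def field_simps)
  have "(1 - sfun l) powr (- \<kappa>) = (l + 1) powr \<kappa>"
    unfolding e1 using assms by (simp add: powr_minus powr_divide)
  moreover have "sfun l powr \<kappa> * (l + 1) powr \<kappa> = l powr \<kappa>"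
    using assms by (simp add: sfun_def powr_mult[symmetric])
  moreover have "\<theta> * sfun l / (1 - sfun l) = l * \<theta>"
    unfolding e1 using assms by (simp add: sfun_def field_simps)
  ultimately show ?thesis by (simp add: mult.assoc[symmetric])
qed

lemma gamma_kernel_integral:
  fixes a \<kappa> :: real
  assumes a: "0 < a" and k: "0 < \<kappa>"
  shows "set_integrable lborel {0<..} (\<lambda>\<theta>. \<theta> powr (\<kappa> - 1) * exp (- a * \<theta>))"
    "(LINT \<theta>:{0<..}|lborel. \<theta> powr (\<kappa> - 1) * exp (- a * \<theta>)) = Gamma \<kappa> / a powr \<kappa>"
proof -
  define F where "F t = indicator {0..} t * t powr (\<kappa> - 1) / exp t" for t :: real
  have Fm: "F \<in> borel_measurable lborel" unfolding F_def by measurable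
  have "(\<integral>\<^sup>+t. ennreal (F t) \<partial>lborel) = ennreal (Gamma \<kappa>)"
    using Gamma_conv_nn_integral_real[OF k] unfolding F_def by simp
  then have FI: "integrable lborel F" "integral\<^sup>L lborel F = Gamma \<kappa>"
    using nn_integral_eq_integrable[OF Fm _ less_imp_le[OF Gamma_real_pos[OF k]]]
    by (auto simp: F_def)
  have eq: "indicator {0<..} \<theta> * (\<theta> powr (\<kappa> - 1) * exp (- a * \<theta>)) = a powr (1 - \<kappa>) * F (0 + a * \<theta>)"
    for \<theta>
  proof (cases "\<theta> > 0")
    case True
    then show ?thesis using a by (simp add: F_def powr_mult powr_diff exp_minus field_simps)
  next
    case False
    then show ?thesis using a by (auto simp: F_def indicator_def zero_le_mult_iff)
  qed
  have "integrable lborel (\<lambda>\<theta>. F (0 + a * \<theta>))"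
    using lborel_integrable_real_affine_iff[of a F 0] FI a by simp
  then show "set_integrable lborel {0<..} (\<lambda>\<theta>. \<theta> powr (\<kappa> - 1) * exp (- a * \<theta>))"
    unfolding set_integrable_def by (simp only: real_scaleR_def eq) simp
  have "integral\<^sup>L lborel F = a *\<^sub>R (\<integral>\<theta>. F (0 + a * \<theta>) \<partial>lborel)"
    using lborel_integral_real_affine[of a F 0] a by simp
  then have v: "(\<integral>\<theta>. F (0 + a * \<theta>) \<partial>lborel) = Gamma \<kappa> / a" using FI a by (simp add: field_simps)
  have "(LINT \<theta>:{0<..}|lborel. \<theta> powr (\<kappa> - 1) * exp (- a * \<theta>))
      = (\<integral>\<theta>. a powr (1 - \<kappa>) * F (0 + a * \<theta>) \<partial>lborel)"
    unfolding set_lebesgue_integral_def by (simp only: real_scaleR_def eq)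
  also have "\<dots> = a powr (1 - \<kappa>) * (Gamma \<kappa> / a)" using v by (simp del: times_divide_eq_right)
  also have "\<dots> = Gamma \<kappa> / a powr \<kappa>" using a by (simp add: powr_diff field_simps)
  finally show "(LINT \<theta>:{0<..}|lborel. \<theta> powr (\<kappa> - 1) * exp (- a * \<theta>)) = Gamma \<kappa> / a powr \<kappa>" .
qed

lemma set_integral_abs_le:
  fixes f g :: "real \<Rightarrow> real"
  assumes g: "set_integrable lborel S g" and "\<And>x. x \<in> S \<Longrightarrow> \<bar>f x\<bar> \<le> g x"
  shows "(LINT x:S|lborel. \<bar>f x\<bar>) \<le> (LINT x:S|lborel. g x)"
proof (cases "set_integrable lborel S (\<lambda>x. \<bar>f x\<bar>)")
  case True
  then show ?thesis using g assms(2) by (rule set_integral_mono)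
next
  case False
  have "0 \<le> (LINT x:S|lborel. g x)"
    unfolding set_lebesgue_integral_def using assms(2)
    by (intro Bochner_Integration.integral_nonneg) (auto simp: indicator_def intro: order_trans[OF abs_ge_zero])
  with False show ?thesis
    unfolding set_integrable_def set_lebesgue_integral_def by (simp add: not_integrable_integral_eq)
qed

lemma le_powr_interpolate:
  fixes x a b \<beta> :: real
  assumes "0 \<le> x" "x \<le> a" "x \<le> b" "0 < \<beta>" "\<beta> < 1"
  shows "x \<le> a powr \<beta> * b powr (1 - \<beta>)"
proof (cases "x = 0")
  case False
  then have "x = x powr \<beta> * x powr (1 - \<beta>)" using assms by (simp add: powr_add[symmetric])
  also have "\<dots> \<le> a powr \<beta> * b powr (1 - \<beta>)"
    using assms by (intro mult_mono powr_mono2) auto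
  finally show ?thesis .
qed simp

lemma of_nat_mult_self_le_four_power: "real k * real k \<le> 4 ^ k"
proof -
  have "real k \<le> 2 ^ k"
    by (metis less_exp less_imp_le of_nat_le_iff of_nat_numeral of_nat_power)
  then have "real k * real k \<le> 2 ^ k * 2 ^ k" by (intro mult_mono) auto
  then show ?thesis by (simp add: power_mult_distrib[symmetric])
qed

context support_interval
begin

text \<open>The Taylor expansion of \<open>\<psi>\<close> is taken on the circle of radius \<open>r\<close>, strictly between
  the range \<open>[0, sU]\<close> of \<open>sfun\<close> on \<open>[L, U]\<close> and the singularity at 1.\<close>
definition "r = (1 + sU) / 2"
definition "q = sU / r"
definition "\<rho> = 8 / r"

text \<open>Interpolating between a bound growing like \<open>e\<^sup>\<theta>\<close> and one decaying like \<open>e\<^sup>-\<^sup>L\<^sup>\<theta>\<close> with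
  weights \<open>\<beta>\<close> and \<open>1 - \<beta>\<close> leaves the decay \<open>e\<^sup>-\<^sup>L\<^sup>\<theta>\<^sup>/\<^sup>2\<close>.\<close>
definition "\<beta> = L / (2 * (1 + L))"

definition "rate_exponent = \<beta> / 8 * min 1 (- ln q / ln \<rho>)"

lemma radius_bounds: "0 < r" "r < 1" "sU < r" "0 < q" "q < 1" "1 < \<rho>"
  using st_bounds unfolding r_def q_def \<rho>_def by (auto simp: divide_simps)

lemma beta_bounds: "0 < \<beta>" "\<beta> < 1/2" "\<beta> * (1 + L) = L / 2"
  using L_pos unfolding \<beta>_def by (auto simp: field_simps)

lemma rate_exponent_bounds:
  "0 < rate_exponent" "rate_exponent < 1/2" "rate_exponent \<le> \<beta> / 8"
  "rate_exponent \<le> \<beta> * (- ln q) / (8 * ln \<rho>)"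
proof -
  have lq: "- ln q > 0" and lr: "ln \<rho> > 0" using radius_bounds by simp_all
  then have m: "0 < min 1 (- ln q / ln \<rho>)" "min 1 (- ln q / ln \<rho>) \<le> 1"
    "min 1 (- ln q / ln \<rho>) \<le> - ln q / ln \<rho>"
    by (auto simp: divide_neg_pos)
  show "0 < rate_exponent" unfolding rate_exponent_def using m beta_bounds by simp
  show "rate_exponent \<le> \<beta> / 8" unfolding rate_exponent_def using m beta_bounds by (simp add: mult_left_le)
  then show "rate_exponent < 1/2" using beta_bounds by simp
  have "\<beta> / 8 * min 1 (- ln q / ln \<rho>) \<le> \<beta> / 8 * (- ln q / ln \<rho>)"
    by (rule mult_left_mono[OF m(3)]) (use beta_bounds in simp)
  then show "rate_exponent \<le> \<beta> * (- ln q) / (8 * ln \<rho>)" unfolding rate_exponent_def by simp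
qed

end

locale gamma_mixture = support_interval +
  fixes \<kappa> :: real
  assumes \<kappa>_pos: "0 < \<kappa>"
begin

definition "mk = min \<kappa> 1"
definition "psi_bound \<theta> = (1 - r) powr (- \<kappa>) * exp \<theta>"
definition "approx_error \<epsilon> k = \<rho> ^ k * \<epsilon> / mk + 2 * q ^ k / (1 - q)"
definition "K0 = (1 - r) powr (- \<kappa> * \<beta>) * U powr (\<kappa> * (1 - \<beta>))"

definition s_moment :: "real measure \<Rightarrow> nat \<Rightarrow> real" where
  "s_moment H j = (\<integral>l. sfun l powr \<kappa> * sfun l ^ j \<partial>H)"

definition laplace :: "real measure \<Rightarrow> real \<Rightarrow> real" where
  "laplace H \<theta> = (\<integral>l. l powr \<kappa> * exp (- l * \<theta>) \<partial>H)"

lemma mk_bounds: "0 < mk" "mk \<le> 1"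
  using \<kappa>_pos unfolding mk_def by auto

lemma psi_bound_pos: "0 < psi_bound \<theta>"
  unfolding psi_bound_def using radius_bounds by simp

lemma K0_pos: "0 < K0"
  unfolding K0_def using radius_bounds L_pos L_less_U by simp

lemma approx_error_nonneg: "0 \<le> \<epsilon> \<Longrightarrow> 0 \<le> approx_error \<epsilon> k"
  unfolding approx_error_def using radius_bounds mk_bounds by (intro add_nonneg_nonneg) auto

lemma borel_measurable_s_kernel [measurable]:
  "(\<lambda>l. sfun l powr \<kappa> * sfun l ^ j) \<in> borel_measurable borel"
  unfolding sfun_def by measurable

lemma s_moment_eq_binomial_sum:
  assumes H: "prob_on L U H"
  shows "s_moment H j = (\<Sum>i\<le>j. of_nat (j choose i) * (-1) ^ i * nb_moment \<kappa> H i)"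
proof -
  have "s_moment H j
      = (\<integral>l. (\<Sum>i\<le>j. of_nat (j choose i) * (-1) ^ i * (tfun l ^ i * sfun l powr \<kappa>)) \<partial>H)"
    unfolding s_moment_def
  proof (rule prob_on_integral_cong[OF H borel_measurable_s_kernel])
    fix l assume l: "L \<le> l" "l \<le> U"
    have "sfun l ^ j = (- tfun l + 1) ^ j" using one_minus_tfun[OF l(1)] by simp
    also have "\<dots> = (\<Sum>i\<le>j. of_nat (j choose i) * (-1) ^ i * tfun l ^ i)"
      unfolding binomial_ring by (rule sum.cong) (simp_all add: power_mult_distrib[symmetric])
    finally have E: "sfun l ^ j = (\<Sum>i\<le>j. of_nat (j choose i) * (-1) ^ i * tfun l ^ i)" .
    show "sfun l powr \<kappa> * sfun l ^ j
        = (\<Sum>i\<le>j. of_nat (j choose i) * (-1) ^ i * (tfun l ^ i * sfun l powr \<kappa>))"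
      unfolding E sum_distrib_left by (rule sum.cong) (simp_all add: mult_ac)
  qed measurable
  also have "\<dots> = (\<Sum>i\<le>j. of_nat (j choose i) * (-1) ^ i * nb_moment \<kappa> H i)"
    unfolding nb_moment_def using integrable_nb_kernel[OF H \<kappa>_pos]
    by (simp add: Bochner_Integration.integral_sum integral_mult_right_zero)
  finally show ?thesis .
qed

lemma nb_moment_diff_le:
  assumes e: "\<And>i. \<bar>fH \<kappa> H1 i - fH \<kappa> H2 i\<bar> \<le> \<epsilon>"
  shows "\<bar>nb_moment \<kappa> H1 i - nb_moment \<kappa> H2 i\<bar> \<le> \<epsilon> * (i + 1) / mk"
proof -
  have c: "mk / (i + 1) \<le> nb_coeff \<kappa> i" "0 < nb_coeff \<kappa> i"
    using nb_coeff_lower[OF \<kappa>_pos, of i] nb_coeff_pos[OF \<kappa>_pos] by (auto simp: mk_def add.commute)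
  have "mk / (i + 1) * \<bar>nb_moment \<kappa> H1 i - nb_moment \<kappa> H2 i\<bar>
      \<le> nb_coeff \<kappa> i * \<bar>nb_moment \<kappa> H1 i - nb_moment \<kappa> H2 i\<bar>"
    using c by (intro mult_right_mono) auto
  also have "\<dots> = \<bar>fH \<kappa> H1 i - fH \<kappa> H2 i\<bar>"
    using c by (simp add: fH_eq_nb_moment right_diff_distrib[symmetric] abs_mult)
  also have "\<dots> \<le> \<epsilon>" by (rule e)
  finally show ?thesis using mk_bounds by (simp add: field_simps)
qed

lemma s_moment_diff_le:
  assumes H1: "prob_on L U H1" and H2: "prob_on L U H2"
    and e: "\<And>i. \<bar>fH \<kappa> H1 i - fH \<kappa> H2 i\<bar> \<le> \<epsilon>"
  shows "\<bar>s_moment H1 j - s_moment H2 j\<bar> \<le> 2 ^ j * (\<epsilon> * (j + 1) / mk)"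
proof -
  have "s_moment H1 j - s_moment H2 j
      = (\<Sum>i\<le>j. of_nat (j choose i) * (-1) ^ i * (nb_moment \<kappa> H1 i - nb_moment \<kappa> H2 i))"
    unfolding s_moment_eq_binomial_sum[OF H1] s_moment_eq_binomial_sum[OF H2]
    by (simp add: sum_subtractf right_diff_distrib)
  also have "\<bar>\<dots>\<bar> \<le> (\<Sum>i\<le>j. of_nat (j choose i) * (\<epsilon> * (j + 1) / mk))"
  proof (rule order_trans[OF sum_abs], rule sum_mono)
    fix i assume i: "i \<in> {..j}"
    have "\<bar>nb_moment \<kappa> H1 i - nb_moment \<kappa> H2 i\<bar> \<le> \<epsilon> * (i + 1) / mk"
      by (rule nb_moment_diff_le[OF e])
    also have "\<dots> \<le> \<epsilon> * (j + 1) / mk"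
      using i e[of 0] mk_bounds by (intro divide_right_mono mult_left_mono) auto
    finally show "\<bar>of_nat (j choose i) * (-1) ^ i * (nb_moment \<kappa> H1 i - nb_moment \<kappa> H2 i)\<bar>
        \<le> of_nat (j choose i) * (\<epsilon> * (j + 1) / mk)"
      by (simp add: abs_mult mult_left_mono del: times_divide_eq_right)
  qed
  also have "\<dots> = 2 ^ j * (\<epsilon> * (j + 1) / mk)"
  proof -
    have "(\<Sum>i\<le>j. real (j choose i)) = 2 ^ j" by (simp flip: of_nat_sum add: choose_row_sum)
    then show ?thesis by (simp only: sum_distrib_right[symmetric])
  qed
  finally show ?thesis .
qed

lemma laplace_poly_approx:
  assumes H: "prob_on L U H"
    and approx: "\<And>s. 0 \<le> s \<Longrightarrow> s \<le> sU \<Longrightarrow>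
      \<bar>(1 - s) powr (- \<kappa>) * exp (- \<theta> * s / (1 - s)) - (\<Sum>j<k. d j * s ^ j)\<bar> \<le> E"
  shows "\<bar>laplace H \<theta> - (\<Sum>j<k. d j * s_moment H j)\<bar> \<le> E"
proof -
  define R where "R l = sfun l powr \<kappa> * ((1 - sfun l) powr (- \<kappa>) * exp (- \<theta> * sfun l / (1 - sfun l))
      - (\<Sum>j<k. d j * sfun l ^ j))" for l
  have R_meas: "R \<in> borel_measurable borel" unfolding R_def sfun_def by measurable
  have s_range: "0 \<le> sfun l" "sfun l \<le> sU" "sfun l \<le> 1" if "L \<le> l" "l \<le> U" for l
    using sfun_bounds[OF that] st_bounds by auto
  have R_bound: "\<bar>R l\<bar> \<le> E" if l: "L \<le> l" "l \<le> U" for l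
  proof -
    have "\<bar>R l\<bar> = sfun l powr \<kappa> * \<bar>(1 - sfun l) powr (- \<kappa>) * exp (- \<theta> * sfun l / (1 - sfun l))
        - (\<Sum>j<k. d j * sfun l ^ j)\<bar>" unfolding R_def by (simp add: abs_mult)
    also have "\<dots> \<le> 1 * E"
      using approx[OF s_range(1,2)[OF l]] s_range[OF l] \<kappa>_pos by (intro mult_mono powr_le1) auto
    finally show ?thesis by simp
  qed
  have integrable_s_kernel: "integrable H (\<lambda>l. sfun l powr \<kappa> * sfun l ^ j)" for j
  proof (rule prob_on_integrable_bounded[OF H borel_measurable_s_kernel, where B = 1])
    fix l assume "L \<le> l" "l \<le> U"
    with s_range[OF this] \<kappa>_pos show "\<bar>sfun l powr \<kappa> * sfun l ^ j\<bar> \<le> 1"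
      by (auto intro!: mult_le_one powr_le1 power_le_one)
  qed
  have "laplace H \<theta> = (\<integral>l. (\<Sum>j<k. d j * (sfun l powr \<kappa> * sfun l ^ j)) + R l \<partial>H)"
    unfolding laplace_def
  proof (rule prob_on_integral_cong[OF H])
    fix l assume "L \<le> l" "l \<le> U"
    then have "0 < l" using L_pos by simp
    then show "l powr \<kappa> * exp (- l * \<theta>) = (\<Sum>j<k. d j * (sfun l powr \<kappa> * sfun l ^ j)) + R l"
      unfolding R_def powr_exp_eq_sfun_psi[OF \<open>0 < l\<close>]
      by (simp add: right_diff_distrib sum_distrib_left mult.left_commute)
  qed (use R_meas in measurable)
  also have "\<dots> = (\<Sum>j<k. d j * s_moment H j) + integral\<^sup>L H R"
    unfolding s_moment_def using integrable_s_kernel prob_on_integrable_bounded[OF H R_meas R_bound]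
    by (simp add: Bochner_Integration.integral_sum integral_mult_right_zero)
  finally show ?thesis using prob_on_abs_integral_le[OF H R_meas R_bound] by simp
qed

text \<open>The factor \<open>\<rho>\<^sup>k\<close> collects the Cauchy bound \<open>r\<^sup>-\<^sup>j\<close> on the coefficients, the binomial
  inversion \<open>2\<^sup>j\<close>, and the polynomial factors, which are at most \<open>4\<^sup>k\<close>.\<close>
lemma poly_moment_error_le:
  assumes H1: "prob_on L U H1" and H2: "prob_on L U H2"
    and e: "\<And>i. \<bar>fH \<kappa> H1 i - fH \<kappa> H2 i\<bar> \<le> \<epsilon>"
    and d: "\<And>j. \<bar>d j\<bar> \<le> psi_bound \<theta> / r ^ j"
  shows "\<bar>\<Sum>j<k. d j * (s_moment H1 j - s_moment H2 j)\<bar> \<le> psi_bound \<theta> * (\<rho> ^ k * \<epsilon> / mk)"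
proof -
  have eps0: "0 \<le> \<epsilon>" using e[of 0] by linarith
  have "\<bar>\<Sum>j<k. d j * (s_moment H1 j - s_moment H2 j)\<bar>
      \<le> (\<Sum>j<k. psi_bound \<theta> * ((2 / r) ^ k * (\<epsilon> * k / mk)))"
  proof (rule order_trans[OF sum_abs sum_mono])
    fix j assume j: "j \<in> {..<k}"
    have "\<bar>d j * (s_moment H1 j - s_moment H2 j)\<bar> \<le> psi_bound \<theta> / r ^ j * (2 ^ j * (\<epsilon> * (j + 1) / mk))"
      unfolding abs_mult using psi_bound_pos[of \<theta>] radius_bounds
      by (intro mult_mono d s_moment_diff_le[OF H1 H2 e]) auto
    also have "\<dots> = psi_bound \<theta> * ((2 / r) ^ j * (\<epsilon> * (j + 1) / mk))"
      by (simp add: power_divide)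
    also have "\<dots> \<le> psi_bound \<theta> * ((2 / r) ^ k * (\<epsilon> * k / mk))"
      using j psi_bound_pos[of \<theta>] radius_bounds mk_bounds eps0
      by (intro mult_left_mono mult_mono power_increasing divide_right_mono) (auto simp: field_simps)
    finally show "\<bar>d j * (s_moment H1 j - s_moment H2 j)\<bar> \<le> psi_bound \<theta> * ((2 / r) ^ k * (\<epsilon> * k / mk))" .
  qed
  also have "\<dots> = psi_bound \<theta> * ((real k * real k) * (2 / r) ^ k * \<epsilon> / mk)" by simp
  also have "\<dots> \<le> psi_bound \<theta> * (4 ^ k * (2 / r) ^ k * \<epsilon> / mk)"
    using psi_bound_pos[of \<theta>] radius_bounds mk_bounds eps0 of_nat_mult_self_le_four_power[of k]
    by (intro mult_left_mono divide_right_mono mult_right_mono) auto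
  also have "\<dots> = psi_bound \<theta> * (\<rho> ^ k * \<epsilon> / mk)"
    by (simp add: \<rho>_def power_mult_distrib[symmetric])
  finally show ?thesis .
qed

lemma laplace_diff_le_poly:
  assumes H1: "prob_on L U H1" and H2: "prob_on L U H2" and \<theta>: "0 \<le> \<theta>"
    and e: "\<And>i. \<bar>fH \<kappa> H1 i - fH \<kappa> H2 i\<bar> \<le> \<epsilon>"
  shows "\<bar>laplace H1 \<theta> - laplace H2 \<theta>\<bar> \<le> psi_bound \<theta> * approx_error \<epsilon> k"
proof -
  define E where "E = psi_bound \<theta> * q ^ k / (1 - q)"
  obtain d where d: "\<And>j. \<bar>d j\<bar> \<le> psi_bound \<theta> / r ^ j"
    and approx: "\<And>s. 0 \<le> s \<Longrightarrow> s \<le> sU \<Longrightarrow>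
      \<bar>(1 - s) powr (- \<kappa>) * exp (- \<theta> * s / (1 - s)) - (\<Sum>j<k. d j * s ^ j)\<bar> \<le> E"
    using psi_real_poly_approx[of \<kappa> \<theta> r sU k] \<kappa>_pos \<theta> radius_bounds
    unfolding E_def psi_bound_def q_def by auto
  have "(\<Sum>j<k. d j * s_moment H1 j) - (\<Sum>j<k. d j * s_moment H2 j)
      = (\<Sum>j<k. d j * (s_moment H1 j - s_moment H2 j))"
    by (simp add: sum_subtractf right_diff_distrib)
  with laplace_poly_approx[OF H1 approx] laplace_poly_approx[OF H2 approx]
    poly_moment_error_le[OF H1 H2 e d, of k]
  have "\<bar>laplace H1 \<theta> - laplace H2 \<theta>\<bar> \<le> psi_bound \<theta> * (\<rho> ^ k * \<epsilon> / mk) + 2 * E"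
    by (simp add: abs_le_iff)
  also have "\<dots> = psi_bound \<theta> * approx_error \<epsilon> k"
    unfolding E_def approx_error_def by (simp add: algebra_simps)
  finally show ?thesis .
qed

lemma laplace_bounds:
  assumes H: "prob_on L U H" and \<theta>: "0 \<le> \<theta>"
  shows "0 \<le> laplace H \<theta>" "laplace H \<theta> \<le> U powr \<kappa> * exp (- L * \<theta>)"
proof -
  have "0 \<le> l powr \<kappa> * exp (- l * \<theta>) \<and> l powr \<kappa> * exp (- l * \<theta>) \<le> U powr \<kappa> * exp (- L * \<theta>)"
    if "L \<le> l" "l \<le> U" for l
    using that L_pos \<theta> \<kappa>_pos by (auto intro!: mult_mono powr_mono2)
  from prob_on_integral_bounds[OF H _ this]
  show "0 \<le> laplace H \<theta>" "laplace H \<theta> \<le> U powr \<kappa> * exp (- L * \<theta>)"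
    unfolding laplace_def by measurable
qed

lemma laplace_diff_le:
  assumes H1: "prob_on L U H1" and H2: "prob_on L U H2" and \<theta>: "0 \<le> \<theta>"
    and e: "\<And>i. \<bar>fH \<kappa> H1 i - fH \<kappa> H2 i\<bar> \<le> \<epsilon>"
  shows "\<bar>laplace H1 \<theta> - laplace H2 \<theta>\<bar> \<le> K0 * approx_error \<epsilon> k powr \<beta> * exp (- (L / 2) * \<theta>)"
proof -
  have "\<bar>laplace H1 \<theta> - laplace H2 \<theta>\<bar> \<le> U powr \<kappa> * exp (- L * \<theta>)"
    using laplace_bounds[OF H1 \<theta>] laplace_bounds[OF H2 \<theta>] by linarith
  then have "\<bar>laplace H1 \<theta> - laplace H2 \<theta>\<bar>
      \<le> (psi_bound \<theta> * approx_error \<epsilon> k) powr \<beta> * (U powr \<kappa> * exp (- L * \<theta>)) powr (1 - \<beta>)"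
    using laplace_diff_le_poly[OF H1 H2 \<theta> e] beta_bounds by (intro le_powr_interpolate) auto
  also have "\<dots> = K0 * approx_error \<epsilon> k powr \<beta> * (exp (\<theta> * \<beta>) * exp (- L * \<theta> * (1 - \<beta>)))"
    using approx_error_nonneg[of \<epsilon> k] e[of 0] psi_bound_pos[of \<theta>] radius_bounds L_pos L_less_U
    by (simp add: powr_mult psi_bound_def K0_def powr_powr exp_powr_real mult_ac)
  also have "exp (\<theta> * \<beta>) * exp (- L * \<theta> * (1 - \<beta>)) = exp (- (L / 2) * \<theta>)"
  proof -
    have "\<theta> * \<beta> + (- L * \<theta> * (1 - \<beta>)) = \<theta> * (\<beta> * (1 + L)) - L * \<theta>" by (simp add: algebra_simps)
    also have "\<dots> = - (L / 2) * \<theta>" by (subst beta_bounds(3)) (simp add: field_simps)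
    finally show ?thesis by (simp flip: exp_add)
  qed
  finally show ?thesis .
qed

lemma gH_eq_laplace: "gH \<kappa> H \<theta> = \<theta> powr (\<kappa> - 1) / Gamma \<kappa> * laplace H \<theta>"
proof -
  have "gH \<kappa> H \<theta> = (\<integral>l. \<theta> powr (\<kappa> - 1) / Gamma \<kappa> * (l powr \<kappa> * exp (- l * \<theta>)) \<partial>H)"
    unfolding gH_def by (rule Bochner_Integration.integral_cong) (simp_all add: field_simps)
  then show ?thesis unfolding laplace_def by simp
qed

lemma TV_gH_le:
  assumes H1: "prob_on L U H1" and H2: "prob_on L U H2"
    and e: "\<And>i. \<bar>fH \<kappa> H1 i - fH \<kappa> H2 i\<bar> \<le> \<epsilon>"
  shows "TV (gH \<kappa> H1) (gH \<kappa> H2) \<le> 1/2 * K0 * (2 / L) powr \<kappa> * approx_error \<epsilon> k powr \<beta>"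
proof -
  define C where "C = K0 * approx_error \<epsilon> k powr \<beta> / Gamma \<kappa>"
  have \<Gamma>: "0 < Gamma \<kappa>" by (rule Gamma_real_pos[OF \<kappa>_pos])
  have L2: "0 < L / 2" using L_pos by simp
  have bound: "\<bar>gH \<kappa> H1 \<theta> - gH \<kappa> H2 \<theta>\<bar> \<le> C * (\<theta> powr (\<kappa> - 1) * exp (- (L / 2) * \<theta>))"
    if "\<theta> \<in> {0<..}" for \<theta>
  proof -
    have "\<bar>gH \<kappa> H1 \<theta> - gH \<kappa> H2 \<theta>\<bar> = \<theta> powr (\<kappa> - 1) / Gamma \<kappa> * \<bar>laplace H1 \<theta> - laplace H2 \<theta>\<bar>"
      unfolding gH_eq_laplace right_diff_distrib[symmetric] using \<Gamma> by (simp add: abs_mult)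
    also have "\<dots> \<le> \<theta> powr (\<kappa> - 1) / Gamma \<kappa> * (K0 * approx_error \<epsilon> k powr \<beta> * exp (- (L / 2) * \<theta>))"
      using \<Gamma> that by (intro mult_left_mono laplace_diff_le[OF H1 H2 _ e]) auto
    also have "\<dots> = C * (\<theta> powr (\<kappa> - 1) * exp (- (L / 2) * \<theta>))" unfolding C_def by simp
    finally show ?thesis .
  qed
  have "(LINT \<theta>:{0<..}|lborel. \<bar>gH \<kappa> H1 \<theta> - gH \<kappa> H2 \<theta>\<bar>)
      \<le> (LINT \<theta>:{0<..}|lborel. C * (\<theta> powr (\<kappa> - 1) * exp (- (L / 2) * \<theta>)))"
    using gamma_kernel_integral(1)[OF L2 \<kappa>_pos] bound
    by (intro set_integral_abs_le set_integrable_mult_right)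
  also have "\<dots> = C * (Gamma \<kappa> / (L / 2) powr \<kappa>)"
    using gamma_kernel_integral(2)[OF L2 \<kappa>_pos] by (simp add: set_integral_mult_right)
  also have "\<dots> = K0 * (2 / L) powr \<kappa> * approx_error \<epsilon> k powr \<beta>"
    unfolding C_def using \<Gamma> L_pos by (simp add: powr_divide field_simps)
  finally show ?thesis unfolding TV_def by simp
qed

end

subsection \<open>The NPMLE is close to the truth in the pmf\<close>

definition empirical_pmf :: "'a list \<Rightarrow> 'a \<Rightarrow> real" where
  "empirical_pmf xs x = (\<Sum>i<length xs. if xs ! i = x then 1 else 0) / length xs"

lemma empirical_pmf_nonneg: "0 \<le> empirical_pmf xs x"
  unfolding empirical_pmf_def by (auto intro!: sum_nonneg divide_nonneg_nonneg)

lemma empirical_pmf_le_1: "empirical_pmf xs x \<le> 1"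
proof (cases "xs = []")
  case False
  have "(\<Sum>i<length xs. if xs ! i = x then 1 else 0) \<le> (\<Sum>i<length xs. (1::real))"
    by (intro sum_mono) auto
  then show ?thesis unfolding empirical_pmf_def using False by simp
qed (simp add: empirical_pmf_def)

lemma empirical_pmf_sums:
  assumes "xs \<noteq> []"
  shows "(\<lambda>x. empirical_pmf xs x * g x) sums ((\<Sum>i<length xs. g (xs ! i)) / length xs)"
proof -
  have "(\<lambda>x. \<Sum>i<length xs. if x = xs ! i then g x else 0) sums (\<Sum>i<length xs. g (xs ! i))"
    by (rule sums_sum) (rule sums_single)
  then have "(\<lambda>x. (\<Sum>i<length xs. if x = xs ! i then g x else 0) / length xs)
      sums ((\<Sum>i<length xs. g (xs ! i)) / length xs)"
    by (rule sums_divide)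
  moreover have "(\<Sum>i<length xs. if x = xs ! i then g x else 0) / length xs = empirical_pmf xs x * g x" for x
  proof -
    have "(\<Sum>i<length xs. if x = xs ! i then g x else 0) = (\<Sum>i<length xs. if xs ! i = x then 1 else 0) * g x"
      by (subst sum_distrib_right) (rule sum.cong, auto)
    then show ?thesis unfolding empirical_pmf_def by simp
  qed
  ultimately show ?thesis by simp
qed

lemma summable_empirical_pmf_mult: "summable (\<lambda>x. empirical_pmf xs x * g x)"
proof (cases "xs = []")
  case False
  then show ?thesis using empirical_pmf_sums sums_summable by blast
qed (simp add: empirical_pmf_def)

lemma ln_ratio_hellinger_ineq:
  fixes a b :: real
  assumes a: "0 < a" and b: "0 < b"
  shows "b * (ln a - ln b) \<le> a - b - (sqrt a - sqrt b)\<^sup>2"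
proof -
  have sa: "0 < sqrt a" "0 < sqrt b" using a b by auto
  have "ln a - ln b = 2 * ln (sqrt a / sqrt b)"
    using a b by (simp add: ln_div ln_sqrt)
  also have "\<dots> \<le> 2 * (sqrt a / sqrt b - 1)"
    using sa by (intro mult_left_mono ln_le_minus_one) auto
  finally have "b * (ln a - ln b) \<le> b * (2 * (sqrt a / sqrt b - 1))"
    using b by (intro mult_left_mono) auto
  also have "\<dots> = 2 * sqrt a * sqrt b - 2 * b"
  proof -
    have "t\<^sup>2 * (2 * (x / t - 1)) = 2 * x * t - 2 * t\<^sup>2" if "t > 0" for t x :: real
      using that by (simp add: field_simps power2_eq_square)
    from this[OF sa(2), of "sqrt a"] show ?thesis using b by simp
  qed
  also have "\<dots> = a - b - (sqrt a - sqrt b)\<^sup>2"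
    using a b by (simp add: power2_eq_square algebra_simps)
  finally show ?thesis .
qed

lemma hellinger_le_neg_log_ratio:
  fixes f g :: "nat \<Rightarrow> real"
  assumes f: "\<And>x. 0 < f x" "f sums 1" and g: "\<And>x. 0 < g x" "g sums 1"
    and S: "(\<lambda>x. g x * (ln (f x) - ln (g x))) sums S"
  shows "summable (\<lambda>x. (sqrt (f x) - sqrt (g x))\<^sup>2)" "(\<Sum>x. (sqrt (f x) - sqrt (g x))\<^sup>2) \<le> - S"
proof -
  show hs: "summable (\<lambda>x. (sqrt (f x) - sqrt (g x))\<^sup>2)"
  proof (rule summable_comparison_test'[where g = "\<lambda>x. f x + g x"])
    show "summable (\<lambda>x. f x + g x)" using f g by (intro summable_add sums_summable) auto
    fix x
    have "(sqrt (f x) - sqrt (g x))\<^sup>2 \<le> f x + g x"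
      using f(1)[of x] g(1)[of x] by (simp add: power2_eq_square algebra_simps)
    then show "norm ((sqrt (f x) - sqrt (g x))\<^sup>2) \<le> f x + g x" by simp
  qed
  have "S \<le> 1 - 1 - (\<Sum>x. (sqrt (f x) - sqrt (g x))\<^sup>2)"
  proof (rule sums_le[OF _ S])
    show "(\<lambda>x. f x - g x - (sqrt (f x) - sqrt (g x))\<^sup>2) sums (1 - 1 - (\<Sum>x. (sqrt (f x) - sqrt (g x))\<^sup>2))"
      using f g hs by (intro sums_diff summable_sums)
    show "g x * (ln (f x) - ln (g x)) \<le> f x - g x - (sqrt (f x) - sqrt (g x))\<^sup>2" for x
      by (rule ln_ratio_hellinger_ineq[OF f(1) g(1)])
  qed
  then show "(\<Sum>x. (sqrt (f x) - sqrt (g x))\<^sup>2) \<le> - S" by simp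
qed

lemma abs_diff_le_hellinger:
  fixes a b h :: real
  assumes "0 \<le> a" "a \<le> 1" "0 \<le> b" "b \<le> 1" "(sqrt a - sqrt b)\<^sup>2 \<le> h"
  shows "\<bar>a - b\<bar> \<le> 2 * sqrt h"
proof -
  have d: "\<bar>sqrt a - sqrt b\<bar> \<le> sqrt h"
    using real_sqrt_le_mono[OF assms(5)] by simp
  have "a - b = (sqrt a - sqrt b) * (sqrt a + sqrt b)"
    using assms by (simp add: algebra_simps)
  then have "\<bar>a - b\<bar> = \<bar>sqrt a - sqrt b\<bar> * (sqrt a + sqrt b)"
    using assms by (simp add: abs_mult)
  also have "\<dots> \<le> sqrt h * 2"
  proof (rule mult_mono[OF d])
    have "sqrt a \<le> 1" "sqrt b \<le> 1" using assms(2,4) by auto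
    then show "sqrt a + sqrt b \<le> 2" by linarith
    show "0 \<le> sqrt h" using order_trans[OF zero_le_power2 assms(5)] by simp
  qed (use assms in auto)
  finally show ?thesis by simp
qed

context gamma_mixture
begin

definition "A\<kappa> = - \<kappa> * ln sL"
definition "Bc = ln (tL / tU)"
definition "\<omega> = tL powr (1/8)"
definition "D = A\<kappa> + Bc / (1 / \<omega> - 1)"

text \<open>A geometric majorant of the linear bound \<open>A\<kappa> + Bc x\<close> on the log-likelihood ratio; the
  growth rate \<open>\<omega>\<^sup>-\<^sup>1 = tL\<^sup>-\<^sup>1\<^sup>/\<^sup>8\<close> is slow enough that \<open>w x \<surd>f\<^sub>H(x)\<close> is still summable.\<close>
definition "w x = D * (1 / \<omega>) ^ x"

lemma omega_bounds: "0 < \<omega>" "\<omega> < 1" "\<omega> ^ 8 = tL"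
proof -
  show "0 < \<omega>" unfolding \<omega>_def using st_bounds by simp
  have "tL powr (1/8) < 1 powr (1/8)" using st_bounds by (intro powr_less_mono2) auto
  then show "\<omega> < 1" unfolding \<omega>_def by simp
  have "(tL powr (1/8)) ^ 8 = tL" using st_bounds by (simp add: powr_realpow[symmetric] powr_powr)
  then show "\<omega> ^ 8 = tL" unfolding \<omega>_def .
qed

lemma A\<kappa>_Bc_bounds: "0 \<le> A\<kappa>" "0 < Bc"
proof -
  have "ln sL < 0" using st_bounds by simp
  then show "0 \<le> A\<kappa>" unfolding A\<kappa>_def using \<kappa>_pos by (simp add: mult_nonneg_nonpos)
  have "tL / tU > 1" using st_bounds by simp
  then show "0 < Bc" unfolding Bc_def by simp
qed

lemma D_nonneg: "0 \<le> D"
  unfolding D_def using A\<kappa>_Bc_bounds omega_bounds by (intro add_nonneg_nonneg divide_nonneg_pos) auto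

lemma w_nonneg: "0 \<le> w x"
  unfolding w_def using D_nonneg omega_bounds by simp

lemma linear_le_w: "A\<kappa> + Bc * x \<le> w x"
proof -
  define \<delta> where "\<delta> = 1 / \<omega> - 1"
  have d0: "\<delta> > 0" unfolding \<delta>_def using omega_bounds by simp
  have "1 + real x * \<delta> \<le> (1 + \<delta>) ^ x" using d0 by (intro Bernoulli_inequality) simp
  then have x: "real x \<le> (1 + \<delta>) ^ x / \<delta>" using d0 by (simp add: field_simps)
  have "1 \<le> (1 + \<delta>) ^ x" using d0 by simp
  then have "A\<kappa> \<le> A\<kappa> * (1 + \<delta>) ^ x"
    using A\<kappa>_Bc_bounds mult_left_mono[of 1 "(1 + \<delta>) ^ x" A\<kappa>] by simp
  moreover have "Bc * x \<le> Bc * ((1 + \<delta>) ^ x / \<delta>)"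
    using A\<kappa>_Bc_bounds x by (intro mult_left_mono) auto
  ultimately have "A\<kappa> + Bc * x \<le> A\<kappa> * (1 + \<delta>) ^ x + Bc * ((1 + \<delta>) ^ x / \<delta>)" by linarith
  also have "\<dots> = w x" unfolding w_def D_def \<delta>_def by (simp add: algebra_simps)
  finally show ?thesis .
qed

lemma abs_ln_fH_ratio_le:
  assumes H1: "prob_on L U H1" and H2: "prob_on L U H2"
  shows "\<bar>ln (fH \<kappa> H1 x) - ln (fH \<kappa> H2 x)\<bar> \<le> w x"
proof -
  have one_side: "ln (fH \<kappa> H1 x) - ln (fH \<kappa> H2 x) \<le> A\<kappa> + Bc * x"
    if H1: "prob_on L U H1" and H2: "prob_on L U H2" for H1 H2
  proof -
    have c: "0 < nb_coeff \<kappa> x" by (rule nb_coeff_pos[OF \<kappa>_pos])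
    have "ln (fH \<kappa> H1 x) \<le> ln (nb_coeff \<kappa> x * tL ^ x)"
      using fH_bounds[OF H1 \<kappa>_pos, of x] by (subst ln_le_cancel_iff) auto
    also have "\<dots> = ln (nb_coeff \<kappa> x) + x * ln tL" using c st_bounds by (simp add: ln_mult ln_realpow)
    finally have upper: "ln (fH \<kappa> H1 x) \<le> ln (nb_coeff \<kappa> x) + x * ln tL" .
    have "ln (nb_coeff \<kappa> x) + x * ln tU + \<kappa> * ln sL = ln (nb_coeff \<kappa> x * (tU ^ x * sL powr \<kappa>))"
      using c st_bounds by (simp add: ln_mult ln_realpow ln_powr)
    also have "\<dots> \<le> ln (fH \<kappa> H2 x)"
      using fH_bounds[OF H2 \<kappa>_pos, of x] c st_bounds by (subst ln_le_cancel_iff) auto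
    finally have lower: "ln (nb_coeff \<kappa> x) + x * ln tU + \<kappa> * ln sL \<le> ln (fH \<kappa> H2 x)" .
    have "Bc * x = x * ln tL - x * ln tU"
      unfolding Bc_def using st_bounds by (simp add: ln_div algebra_simps)
    with upper lower show ?thesis unfolding A\<kappa>_def by linarith
  qed
  from one_side[OF H1 H2] one_side[OF H2 H1] linear_le_w[of x] show ?thesis by linarith
qed

lemma summable_fH_mult_w:
  assumes H: "prob_on L U H"
  shows "summable (\<lambda>x. fH \<kappa> H x * w x)"
proof (rule summable_comparison_test'[where g = "\<lambda>x. D * (nb_coeff \<kappa> x * (\<omega> ^ 7) ^ x)"])
  have "summable (\<lambda>x. nb_coeff \<kappa> x * (\<omega> ^ 7) ^ x)"
    using nb_coeff_sums[OF \<kappa>_pos, of "\<omega> ^ 7"] omega_bounds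
    by (auto intro: sums_summable simp: power_less_one_iff)
  then show "summable (\<lambda>x. D * (nb_coeff \<kappa> x * (\<omega> ^ 7) ^ x))" by (rule summable_mult)
  have tL_div: "tL * (1 / \<omega>) = \<omega> ^ 7"
    using omega_bounds by (simp flip: omega_bounds(3) add: eval_nat_numeral)
  fix x
  have "norm (fH \<kappa> H x * w x) = fH \<kappa> H x * w x"
    using fH_bounds(3)[OF H \<kappa>_pos, of x] w_nonneg[of x] by simp
  also have "\<dots> \<le> nb_coeff \<kappa> x * tL ^ x * w x"
    using fH_bounds(2)[OF H \<kappa>_pos, of x] w_nonneg[of x] by (intro mult_right_mono) auto
  also have "\<dots> = D * (nb_coeff \<kappa> x * (tL * (1 / \<omega>)) ^ x)"
    unfolding w_def power_mult_distrib by (simp add: mult_ac)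
  finally show "norm (fH \<kappa> H x * w x) \<le> D * (nb_coeff \<kappa> x * (\<omega> ^ 7) ^ x)"
    unfolding tL_div .
qed

definition "weighted_dev xs Hs = (\<Sum>x. \<bar>empirical_pmf xs x - fH \<kappa> Hs x\<bar> * w x)"

lemma summable_weighted_dev:
  assumes Hs: "prob_on L U Hs"
  shows "summable (\<lambda>x. \<bar>empirical_pmf xs x - fH \<kappa> Hs x\<bar> * w x)"
proof (rule summable_comparison_test'[where g = "\<lambda>x. empirical_pmf xs x * w x + fH \<kappa> Hs x * w x"])
  show "summable (\<lambda>x. empirical_pmf xs x * w x + fH \<kappa> Hs x * w x)"
    by (intro summable_add summable_empirical_pmf_mult summable_fH_mult_w[OF Hs])
  fix x
  have "\<bar>empirical_pmf xs x - fH \<kappa> Hs x\<bar> \<le> empirical_pmf xs x + fH \<kappa> Hs x"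
    using empirical_pmf_nonneg[of xs x] fH_bounds(3)[OF Hs \<kappa>_pos, of x] by linarith
  then show "norm (\<bar>empirical_pmf xs x - fH \<kappa> Hs x\<bar> * w x) \<le> empirical_pmf xs x * w x + fH \<kappa> Hs x * w x"
    using w_nonneg[of x] by (simp add: abs_mult distrib_right[symmetric] mult_right_mono)
qed

lemma weighted_dev_nonneg: "prob_on L U Hs \<Longrightarrow> 0 \<le> weighted_dev xs Hs"
  unfolding weighted_dev_def using w_nonneg by (intro suminf_nonneg summable_weighted_dev) auto

lemma mean_diff_le_weighted_dev:
  assumes Hs: "prob_on L U Hs" and g: "\<And>x. \<bar>g x\<bar> \<le> w x"
    and P: "(\<lambda>x. empirical_pmf xs x * g x) sums P" and S: "(\<lambda>x. fH \<kappa> Hs x * g x) sums S"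
  shows "P - S \<le> weighted_dev xs Hs"
proof (rule sums_le[OF _ sums_diff[OF P S]])
  show "(\<lambda>x. \<bar>empirical_pmf xs x - fH \<kappa> Hs x\<bar> * w x) sums weighted_dev xs Hs"
    unfolding weighted_dev_def by (rule summable_sums[OF summable_weighted_dev[OF Hs]])
  fix x
  have "(empirical_pmf xs x - fH \<kappa> Hs x) * g x \<le> \<bar>empirical_pmf xs x - fH \<kappa> Hs x\<bar> * \<bar>g x\<bar>"
    by (simp flip: abs_mult)
  also have "\<dots> \<le> \<bar>empirical_pmf xs x - fH \<kappa> Hs x\<bar> * w x"
    by (intro mult_left_mono g) auto
  finally show "empirical_pmf xs x * g x - fH \<kappa> Hs x * g x \<le> \<bar>empirical_pmf xs x - fH \<kappa> Hs x\<bar> * w x"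
    by (simp add: left_diff_distrib)
qed

text \<open>Maximality gives \<open>\<Sum> p\<^sub>n log(f\<^sub>H\<^sub>h\<^sub>a\<^sub>t / f\<^sub>H\<^sub>*) \<ge> 0\<close>; replacing the empirical pmf \<open>p\<^sub>n\<close> by
  \<open>f\<^sub>H\<^sub>*\<close> costs at most \<open>weighted_dev\<close>, and what remains bounds the Hellinger distance.\<close>
lemma npmle_fH_dev_le:
  assumes ne: "xs \<noteq> []" and np: "is_npmle \<kappa> L U xs Hh" and Hs: "prob_on L U Hs"
  shows "\<bar>fH \<kappa> Hh i - fH \<kappa> Hs i\<bar> \<le> 2 * sqrt (weighted_dev xs Hs)"
proof -
  have Hh: "prob_on L U Hh" using np unfolding is_npmle_def by simp
  define f1 where "f1 = fH \<kappa> Hh"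
  define f2 where "f2 = fH \<kappa> Hs"
  define lr where "lr x = ln (f1 x) - ln (f2 x)" for x
  have f1: "0 < f1 x" "f1 x \<le> 1" "f1 sums 1" for x
    unfolding f1_def using fH_bounds(3)[OF Hh \<kappa>_pos] fH_le_1[OF Hh \<kappa>_pos] fH_sums[OF Hh \<kappa>_pos] by auto
  have f2: "0 < f2 x" "f2 x \<le> 1" "f2 sums 1" for x
    unfolding f2_def using fH_bounds(3)[OF Hs \<kappa>_pos] fH_le_1[OF Hs \<kappa>_pos] fH_sums[OF Hs \<kappa>_pos] by auto
  have lr_le: "\<bar>lr x\<bar> \<le> w x" for x
    unfolding lr_def f1_def f2_def by (rule abs_ln_fH_ratio_le[OF Hh Hs])
  define P where "P = (\<Sum>i<length xs. lr (xs ! i)) / length xs"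
  have "loglik \<kappa> Hs xs \<le> loglik \<kappa> Hh xs" using np Hs unfolding is_npmle_def by blast
  then have P_nonneg: "0 \<le> P"
    unfolding P_def loglik_def lr_def f1_def f2_def by (simp add: sum_subtractf)
  have "norm (f2 x * lr x) \<le> f2 x * w x" for x
    using lr_le[of x] f2(1)[of x] by (simp add: abs_mult abs_of_pos mult_left_mono)
  then have "summable (\<lambda>x. f2 x * lr x)"
    by (rule summable_comparison_test'[OF summable_fH_mult_w[OF Hs, folded f2_def]])
  then obtain S where S: "(\<lambda>x. f2 x * lr x) sums S" by (auto simp: summable_def)
  define hel where "hel x = (sqrt (f1 x) - sqrt (f2 x))\<^sup>2" for x
  note hellinger = hellinger_le_neg_log_ratio[OF f1(1,3) f2(1,3) S[unfolded lr_def], folded hel_def]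
  have "P - S \<le> weighted_dev xs Hs"
    using mean_diff_le_weighted_dev[OF Hs lr_le _ S[unfolded f2_def]] empirical_pmf_sums[OF ne]
    unfolding P_def by blast
  then have "suminf hel \<le> weighted_dev xs Hs" using hellinger(2) P_nonneg by linarith
  moreover have "hel i \<le> suminf hel"
    using sum_le_suminf[OF hellinger(1), of "{i}"] by (simp add: hel_def[abs_def])
  ultimately have "(sqrt (f1 i) - sqrt (f2 i))\<^sup>2 \<le> weighted_dev xs Hs"
    unfolding hel_def by linarith
  from abs_diff_le_hellinger[OF less_imp_le[OF f1(1)] f1(2) less_imp_le[OF f2(1)] f2(2) this]
  show ?thesis unfolding f1_def f2_def .
qed

end

subsection \<open>Independent sampling\<close>

lemma replicate_pmf_Suc_pair:
  "replicate_pmf (Suc n) p = map_pmf (\<lambda>(x, xs). x # xs) (pair_pmf p (replicate_pmf n p))"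
  by (simp add: pair_pmf_def map_pmf_def bind_assoc_pmf bind_return_pmf)

lemma pmf_replicate_pmf:
  "pmf (replicate_pmf n p) xs = (if length xs = n then (\<Prod>i<n. pmf p (xs ! i)) else 0)"
proof (induction n arbitrary: xs)
  case 0 then show ?case by (simp add: pmf_return indicator_def)
next
  case (Suc n)
  show ?case
  proof (cases xs)
    case Nil
    have "pmf (replicate_pmf (Suc n) p) [] = 0"
      by (simp add: pmf_eq_0_set_pmf set_replicate_pmf)
    then show ?thesis using Nil by simp
  next
    case (Cons y ys)
    have "pmf (replicate_pmf (Suc n) p) xs = pmf (pair_pmf p (replicate_pmf n p)) (y, ys)"
      unfolding replicate_pmf_Suc_pair Cons
      using pmf_map_inj'[where f = "\<lambda>(x, xs). x # xs" and x = "(y, ys)"] by (simp add: inj_def)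
    also have "\<dots> = pmf p y * (if length ys = n then (\<Prod>i<n. pmf p (ys ! i)) else 0)"
      by (simp add: pmf_pair Suc.IH)
    also have "\<dots> = (if length xs = Suc n then (\<Prod>i<Suc n. pmf p (xs ! i)) else 0)"
      using Cons by (simp only: prod.lessThan_Suc_shift) simp
    finally show ?thesis .
  qed
qed

lemma map_pmf_nth_replicate_pmf: "i < n \<Longrightarrow> map_pmf (\<lambda>xs. xs ! i) (replicate_pmf n p) = p"
proof (induction n arbitrary: i)
  case 0
  then show ?case by simp
next
  case (Suc n)
  show ?case
  proof (cases i)
    case 0
    have "map_pmf (\<lambda>xs. xs ! i) (replicate_pmf (Suc n) p) = map_pmf fst (pair_pmf p (replicate_pmf n p))"
      unfolding replicate_pmf_Suc_pair map_pmf_comp 0 by (rule map_pmf_cong) auto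
    then show ?thesis by (simp add: map_fst_pair_pmf)
  next
    case (Suc i')
    have "map_pmf (\<lambda>xs. xs ! i) (replicate_pmf (Suc n) p) = map_pmf (\<lambda>xs. xs ! i') (map_pmf snd (pair_pmf p (replicate_pmf n p)))"
      unfolding replicate_pmf_Suc_pair map_pmf_comp Suc by (rule map_pmf_cong) auto
    then show ?thesis using Suc.IH[of i'] Suc.prems Suc by (simp add: map_snd_pair_pmf)
  qed
qed

lemma map_pmf_pair_nth_replicate_pmf:
  "i < n \<Longrightarrow> j < n \<Longrightarrow> i \<noteq> j \<Longrightarrow>
    map_pmf (\<lambda>xs. (xs ! i, xs ! j)) (replicate_pmf n p) = pair_pmf p p"
proof (induction n arbitrary: i j)
  case 0 then show ?case by simp
next
  case (Suc n)
  show ?case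
  proof (cases i)
    case 0
    then obtain j' where j: "j = Suc j'" "j' < n" using Suc.prems by (cases j) auto
    have "map_pmf (\<lambda>xs. (xs ! i, xs ! j)) (replicate_pmf (Suc n) p)
        = map_pmf (\<lambda>(a, b). (id a, b ! j')) (pair_pmf p (replicate_pmf n p))"
      unfolding replicate_pmf_Suc_pair map_pmf_comp 0 j by (rule map_pmf_cong) auto
    also have "\<dots> = pair_pmf p p"
      unfolding map_pair using map_pmf_nth_replicate_pmf[OF j(2), of p] by (simp add: id_def)
    finally show ?thesis .
  next
    case (Suc i')
    show ?thesis
    proof (cases j)
      case 0
      have i': "i' < n" using Suc.prems Suc by simp
      have "map_pmf (\<lambda>xs. (xs ! i, xs ! j)) (replicate_pmf (Suc n) p)
          = map_pmf (\<lambda>(a, b). (b, a)) (map_pmf (\<lambda>(a, b). (id a, b ! i')) (pair_pmf p (replicate_pmf n p)))"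
        unfolding replicate_pmf_Suc_pair map_pmf_comp 0 Suc by (rule map_pmf_cong) auto
      also have "\<dots> = map_pmf (\<lambda>(a, b). (b, a)) (pair_pmf p p)"
        unfolding map_pair using map_pmf_nth_replicate_pmf[OF i', of p] by (simp add: id_def)
      also have "\<dots> = pair_pmf p p" by (rule pair_commute_pmf[of p p, symmetric])
      finally show ?thesis .
    next
      case (Suc j')
      have ij: "i' < n" "j' < n" "i' \<noteq> j'" using Suc.prems \<open>i = Suc i'\<close> Suc by auto
      have "map_pmf (\<lambda>xs. (xs ! i, xs ! j)) (replicate_pmf (Suc n) p)
          = map_pmf (\<lambda>xs. (xs ! i', xs ! j')) (map_pmf snd (pair_pmf p (replicate_pmf n p)))"
        unfolding replicate_pmf_Suc_pair map_pmf_comp Suc \<open>i = Suc i'\<close> by (rule map_pmf_cong) auto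
      then show ?thesis using Suc.IH[OF ij] by (simp add: map_snd_pair_pmf)
    qed
  qed
qed

lemma measure_pmf_integrable_bounded:
  fixes g :: "'a \<Rightarrow> real"
  assumes "\<And>x. \<bar>g x\<bar> \<le> B"
  shows "integrable (measure_pmf M) g"
  by (rule measure_pmf.integrable_const_bound[where B=B]) (use assms in auto)

lemma expectation_indicator_nth:
  assumes "i < n"
  shows "measure_pmf.expectation (replicate_pmf n p) (\<lambda>xs. if xs ! i = x then 1 else (0::real)) = pmf p x"
proof -
  have "measure_pmf.expectation (replicate_pmf n p) (\<lambda>xs. if xs ! i = x then 1 else (0::real))
      = measure_pmf.expectation (map_pmf (\<lambda>xs. xs ! i) (replicate_pmf n p)) (indicator {x})"
    unfolding Probability_Mass_Function.integral_map_pmf by (intro Bochner_Integration.integral_cong) (auto simp: indicator_def)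
  also have "\<dots> = measure_pmf.expectation p (indicator {x})" by (simp only: map_pmf_nth_replicate_pmf[OF assms])
  also have "\<dots> = pmf p x" by (simp add: measure_pmf_single)
  finally show ?thesis .
qed

lemma expectation_indicator_pair_nth:
  assumes "i < n" "j < n" "i \<noteq> j"
  shows "measure_pmf.expectation (replicate_pmf n p) (\<lambda>xs. (if xs ! i = x then 1 else 0) * (if xs ! j = x then 1 else (0::real))) = pmf p x * pmf p x"
proof -
  have "measure_pmf.expectation (replicate_pmf n p) (\<lambda>xs. (if xs ! i = x then 1 else 0) * (if xs ! j = x then 1 else (0::real)))
      = measure_pmf.expectation (map_pmf (\<lambda>xs. (xs ! i, xs ! j)) (replicate_pmf n p)) (indicator {(x, x)})"
    unfolding Probability_Mass_Function.integral_map_pmf by (intro Bochner_Integration.integral_cong) (auto simp: indicator_def)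
  also have "\<dots> = measure_pmf.expectation (pair_pmf p p) (indicator {(x, x)})" by (simp only: map_pmf_pair_nth_replicate_pmf[OF assms])
  also have "\<dots> = pmf p x * pmf p x" by (simp add: measure_pmf_single pmf_pair)
  finally show ?thesis .
qed

lemma expectation_centered_indicator_mult:
  assumes "i < n" "j < n"
  shows "measure_pmf.expectation (replicate_pmf n p)
     (\<lambda>xs. ((if xs ! i = x then 1 else 0) - pmf p x) * ((if xs ! j = x then 1 else 0) - pmf p x))
   = (if i = j then pmf p x - pmf p x * pmf p x else 0)"
proof -
  define f where "f = pmf p x"
  define I where "I = (\<lambda>i xs. if xs ! i = x then 1 else (0::real))"
  have iI: "integrable (measure_pmf (replicate_pmf n p)) (I i)" for i
    by (rule measure_pmf_integrable_bounded[where B=1]) (simp add: I_def)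
  have iII: "integrable (measure_pmf (replicate_pmf n p)) (\<lambda>xs. I i xs * I j xs)" for i j
    by (rule measure_pmf_integrable_bounded[where B=1]) (simp add: I_def)
  have e: "((if xs ! i = x then 1 else 0) - pmf p x) * ((if xs ! j = x then 1 else 0) - pmf p x)
      = I i xs * I j xs - f * I i xs - f * I j xs + f * f" for xs
    unfolding I_def f_def by (simp add: algebra_simps)
  have "measure_pmf.expectation (replicate_pmf n p)
     (\<lambda>xs. ((if xs ! i = x then 1 else 0) - pmf p x) * ((if xs ! j = x then 1 else 0) - pmf p x))
    = measure_pmf.expectation (replicate_pmf n p) (\<lambda>xs. I i xs * I j xs)
      - f * measure_pmf.expectation (replicate_pmf n p) (I i)
      - f * measure_pmf.expectation (replicate_pmf n p) (I j) + f * f"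
    unfolding e using iI iII by (simp add: Bochner_Integration.integral_diff Bochner_Integration.integral_add)
  also have "\<dots> = (if i = j then f - f * f else 0)"
  proof (cases "i = j")
    case True
    have "(\<lambda>xs. I i xs * I j xs) = I i" using True by (auto simp: I_def)
    then show ?thesis using True expectation_indicator_nth[OF assms(1), of p x] unfolding I_def f_def by simp
  next
    case False
    then show ?thesis
      using expectation_indicator_pair_nth[OF assms False, of p x]
        expectation_indicator_nth[OF assms(1), of p x] expectation_indicator_nth[OF assms(2), of p x]
      unfolding I_def f_def by simp
  qed
  finally show ?thesis unfolding f_def .
qed

lemma expectation_empirical_pmf_sq_dev:
  assumes n: "n > 0"
  shows "measure_pmf.expectation (replicate_pmf n p) (\<lambda>xs. (empirical_pmf xs x - pmf p x)^2) = (pmf p x - pmf p x * pmf p x) / n"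
proof -
  define f where "f = pmf p x"
  define ee where "ee = (\<lambda>i xs. (if xs ! i = x then 1 else 0) - f)"
  have AEn: "AE xs in measure_pmf (replicate_pmf n p). length xs = n"
    by (rule AE_pmfI) (simp add: set_replicate_pmf)
  have "measure_pmf.expectation (replicate_pmf n p) (\<lambda>xs. (empirical_pmf xs x - f)^2)
      = measure_pmf.expectation (replicate_pmf n p) (\<lambda>xs. (\<Sum>i<n. \<Sum>j<n. ee i xs * ee j xs) / (real n)^2)"
  proof (rule integral_cong_AE)
    show "AE xs in measure_pmf (replicate_pmf n p). (empirical_pmf xs x - f)^2 = (\<Sum>i<n. \<Sum>j<n. ee i xs * ee j xs) / (real n)^2"
      using AEn
    proof eventually_elim
      case (elim xs)
      have "empirical_pmf xs x - f = (\<Sum>i<n. ee i xs) / n"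
        unfolding empirical_pmf_def ee_def elim using n by (simp add: sum_subtractf field_simps)
      then show ?case by (simp add: power2_eq_square power_divide sum_product)
    qed
  qed simp_all
  also have "\<dots> = (\<Sum>i<n. \<Sum>j<n. measure_pmf.expectation (replicate_pmf n p) (\<lambda>xs. ee i xs * ee j xs)) / (real n)^2"
  proof -
    have eb: "\<bar>ee i xs\<bar> \<le> 1" for i xs
      unfolding ee_def f_def using pmf_le_1[of p x] pmf_nonneg[of p x] by auto
    have ii: "integrable (measure_pmf (replicate_pmf n p)) (\<lambda>xs. ee i xs * ee j xs)" for i j
      by (rule measure_pmf_integrable_bounded[where B=1]) (use eb in \<open>auto simp: abs_mult intro!: mult_le_one\<close>)
    show ?thesis
      by (simp add: Bochner_Integration.integral_sum ii Bochner_Integration.integrable_sum)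
  qed
  also have "\<dots> = (\<Sum>i<n. \<Sum>j<n. (if i = j then f - f * f else 0)) / (real n)^2"
    unfolding ee_def f_def by (intro arg_cong2[where f="(/)"] sum.cong refl expectation_centered_indicator_mult) auto
  also have "\<dots> = (f - f * f) / n" using n by (simp add: power2_eq_square)
  finally show ?thesis unfolding f_def .
qed

lemma abs_empirical_pmf_diff_le_1: "\<bar>empirical_pmf xs x - pmf p x\<bar> \<le> 1"
  using empirical_pmf_le_1[of xs x] empirical_pmf_nonneg[of xs x] pmf_le_1[of p x] pmf_nonneg[of p x]
  by linarith

lemma integrable_abs_empirical_pmf_diff:
  "integrable (measure_pmf M) (\<lambda>xs. \<bar>empirical_pmf xs x - pmf p x\<bar>)"
  by (rule measure_pmf_integrable_bounded[where B = 1]) (simp add: abs_empirical_pmf_diff_le_1)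

text \<open>By AM-GM, \<open>|Y| \<le> (Y\<^sup>2/\<eta> + \<eta>)/2\<close>, applied with \<open>\<eta>\<close> the standard deviation bound.\<close>
lemma expectation_empirical_pmf_abs_dev_le:
  assumes n: "n > 0" and f: "pmf p x > 0"
  shows "measure_pmf.expectation (replicate_pmf n p) (\<lambda>xs. \<bar>empirical_pmf xs x - pmf p x\<bar>) \<le> sqrt (pmf p x / n)"
proof -
  define \<eta> where "\<eta> = sqrt (pmf p x / n)"
  have e0: "\<eta> > 0" unfolding \<eta>_def using n f by simp
  have e2: "\<eta>^2 = pmf p x / n" unfolding \<eta>_def using n f by simp
  have bd: "\<bar>empirical_pmf xs x - pmf p x\<bar> \<le> ((empirical_pmf xs x - pmf p x)^2 / \<eta> + \<eta>) / 2" for xs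
  proof -
    have "0 \<le> (\<bar>empirical_pmf xs x - pmf p x\<bar> - \<eta>)^2" by simp
    then have "2 * \<eta> * \<bar>empirical_pmf xs x - pmf p x\<bar> \<le> (empirical_pmf xs x - pmf p x)^2 + \<eta>^2"
      by (simp add: power2_eq_square algebra_simps)
    then show ?thesis using e0 by (simp add: field_simps power2_eq_square)
  qed
  have i2: "integrable (measure_pmf (replicate_pmf n p)) (\<lambda>xs. (empirical_pmf xs x - pmf p x)^2)"
  proof (rule measure_pmf_integrable_bounded[where B = 1])
    fix xs
    show "\<bar>(empirical_pmf xs x - pmf p x)^2\<bar> \<le> 1"
      using abs_empirical_pmf_diff_le_1 abs_square_le_1[of "empirical_pmf xs x - pmf p x"] by simp
  qed
  have "measure_pmf.expectation (replicate_pmf n p) (\<lambda>xs. \<bar>empirical_pmf xs x - pmf p x\<bar>)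
     \<le> measure_pmf.expectation (replicate_pmf n p) (\<lambda>xs. ((empirical_pmf xs x - pmf p x)^2 / \<eta> + \<eta>) / 2)"
    by (rule integral_mono[OF integrable_abs_empirical_pmf_diff _ bd]) (use i2 in auto)
  also have "\<dots> = ((pmf p x - pmf p x * pmf p x) / n / \<eta> + \<eta>) / 2"
    using i2 expectation_empirical_pmf_sq_dev[OF n, of p x] by (simp add: Bochner_Integration.integral_add prob_space_measure_pmf)
  also have "\<dots> \<le> ((pmf p x / n) / \<eta> + \<eta>) / 2"
    using e0 n f by (intro divide_right_mono add_right_mono) auto
  also have "\<dots> = \<eta>" using e0 by (simp add: e2[symmetric] power2_eq_square)
  finally show ?thesis unfolding \<eta>_def .
qed


lemma expectation_weighted_empirical_dev_le:
  fixes w :: "nat \<Rightarrow> real" and p :: "nat pmf"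
  assumes n: "n > 0" and w: "\<And>x. 0 \<le> w x" and p: "\<And>x. 0 < pmf p x"
    and s1: "summable (\<lambda>x. pmf p x * w x)" and s2: "summable (\<lambda>x. w x * sqrt (pmf p x))"
  defines "Z \<equiv> \<lambda>xs. \<Sum>x. \<bar>empirical_pmf xs x - pmf p x\<bar> * w x"
  shows "integrable (measure_pmf (replicate_pmf n p)) Z"
    "measure_pmf.expectation (replicate_pmf n p) Z \<le> (\<Sum>x. w x * sqrt (pmf p x)) / sqrt n"
proof -
  define R where "R = measure_pmf (replicate_pmf n p)"
  define a where "a x xs = \<bar>empirical_pmf xs x - pmf p x\<bar> * w x" for x xs
  have a_nonneg: "0 \<le> a x xs" for x xs unfolding a_def using w by simp
  have ia: "integrable R (a x)" for x
    unfolding R_def a_def by (intro integrable_mult_left integrable_abs_empirical_pmf_diff)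
  have Ea: "integral\<^sup>L R (a x) \<le> w x * sqrt (pmf p x) / sqrt n" for x
  proof -
    have "integral\<^sup>L R (a x)
        = w x * measure_pmf.expectation (replicate_pmf n p) (\<lambda>xs. \<bar>empirical_pmf xs x - pmf p x\<bar>)"
      unfolding a_def R_def by (simp add: mult.commute)
    also have "\<dots> \<le> w x * sqrt (pmf p x / n)"
      by (intro mult_left_mono expectation_empirical_pmf_abs_dev_le n p w)
    finally show ?thesis by (simp add: real_sqrt_divide)
  qed
  have summable_a: "AE xs in R. summable (\<lambda>x. norm (a x xs))"
  proof (intro AE_I2 summable_comparison_test'[OF summable_add[OF summable_empirical_pmf_mult s1]])
    fix xs x
    have "\<bar>empirical_pmf xs x - pmf p x\<bar> \<le> empirical_pmf xs x + pmf p x"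
      using empirical_pmf_nonneg[of xs x] pmf_nonneg[of p x] by linarith
    then show "norm (norm (a x xs)) \<le> empirical_pmf xs x * w x + pmf p x * w x"
      unfolding a_def using w[of x] by (simp add: abs_mult distrib_right[symmetric] mult_right_mono)
  qed
  have summable_Ea: "summable (\<lambda>x. integral\<^sup>L R (\<lambda>xs. norm (a x xs)))"
    using a_nonneg Ea integral_nonneg_AE[of "\<lambda>xs. norm (a _ xs)" R]
    by (intro summable_comparison_test'[OF summable_divide[OF s2, of "sqrt n"]]) auto
  show "integrable (measure_pmf (replicate_pmf n p)) Z"
    using integrable_suminf[OF ia summable_a summable_Ea] unfolding Z_def a_def R_def .
  have "integral\<^sup>L R (\<lambda>xs. \<Sum>x. a x xs) = (\<Sum>x. integral\<^sup>L R (a x))"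
    by (rule integral_suminf[OF ia summable_a summable_Ea])
  also have "\<dots> \<le> (\<Sum>x. w x * sqrt (pmf p x) / sqrt n)"
    by (intro suminf_le Ea summable_integral[OF ia summable_a summable_Ea] summable_divide s2)
  also have "\<dots> = (\<Sum>x. w x * sqrt (pmf p x)) / sqrt n"
    by (rule suminf_divide[OF s2])
  finally show "measure_pmf.expectation (replicate_pmf n p) Z \<le> (\<Sum>x. w x * sqrt (pmf p x)) / sqrt n"
    unfolding Z_def a_def R_def .
qed

text \<open>The model expectation \<open>expect_data\<close> is an infinite sum that need not converge; the
  comparison with an integrable majorant also covers that case, where the sum is 0.\<close>
lemma infsum_replicate_pmf_le_expectation:
  fixes F G :: "'a list \<Rightarrow> real"
  assumes FG: "\<And>xs. length xs = n \<Longrightarrow> 0 \<le> F xs \<and> F xs \<le> G xs"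
    and iG: "integrable (measure_pmf (replicate_pmf n p)) G"
  shows "infsum (\<lambda>xs. (\<Prod>i<n. pmf p (xs ! i)) * F xs) {xs. length xs = n}
    \<le> measure_pmf.expectation (replicate_pmf n p) G"
proof -
  define R where "R = replicate_pmf n p"
  define h where "h xs = pmf R xs * G xs" for xs
  have ih: "integrable (count_space UNIV) h"
    using iG unfolding h_def R_def by (simp add: measure_pmf_eq_density integrable_density)
  have Eh: "measure_pmf.expectation R G = integral\<^sup>L (count_space UNIV) h"
    unfolding h_def by (simp add: measure_pmf_eq_density integral_density)
  have as: "Infinite_Set_Sum.abs_summable_on h UNIV"
    using ih by (simp add: Infinite_Set_Sum.abs_summable_on_def)
  have hinf: "infsum h UNIV = integral\<^sup>L (count_space UNIV) h"
    using infsetsum_infsum[OF as] by (simp add: infsetsum_def)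
  have hs: "h summable_on UNIV"
    using as abs_summable_equivalent abs_summable_summable by blast
  have length_R: "length xs = n" if "xs \<in> set_pmf R" for xs
    using that by (simp add: R_def set_replicate_pmf)
  have G0: "0 \<le> measure_pmf.expectation R G"
    by (intro integral_nonneg_AE AE_pmfI) (use FG length_R in force)
  have pR: "pmf R xs = (\<Prod>i<n. pmf p (xs ! i))" if "length xs = n" for xs
    unfolding R_def pmf_replicate_pmf using that by simp
  show ?thesis
  proof (cases "(\<lambda>xs. (\<Prod>i<n. pmf p (xs ! i)) * F xs) summable_on {xs. length xs = n}")
    case True
    have "infsum (\<lambda>xs. (\<Prod>i<n. pmf p (xs ! i)) * F xs) {xs. length xs = n} \<le> infsum h UNIV"
    proof (rule infsum_mono_neutral[OF True hs])
      fix xs :: "'a list" assume "xs \<in> {xs. length xs = n} \<inter> UNIV"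
      then have l: "length xs = n" by simp
      show "(\<Prod>i<n. pmf p (xs ! i)) * F xs \<le> h xs"
        unfolding h_def pR[OF l, symmetric] using FG[OF l] by (intro mult_left_mono) auto
    next
      fix xs :: "'a list" assume "xs \<in> UNIV - {xs. length xs = n}"
      then have "pmf R xs = 0" unfolding R_def pmf_replicate_pmf by simp
      then show "0 \<le> h xs" unfolding h_def by simp
    qed simp
    then show ?thesis unfolding R_def[symmetric] Eh hinf .
  next
    case False
    then show ?thesis using G0 unfolding R_def by (simp add: infsum_not_exists)
  qed
qed

subsection \<open>The rate\<close>

lemma powr_le_affine:
  fixes z \<eta> \<gamma> :: real
  assumes z: "0 \<le> z" and \<eta>: "0 < \<eta>" and \<gamma>: "0 < \<gamma>" "\<gamma> \<le> 1"
  shows "z powr \<gamma> \<le> \<eta> powr \<gamma> + \<eta> powr (\<gamma> - 1) * z"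
proof (cases "z \<le> \<eta>")
  case True
  then have "z powr \<gamma> \<le> \<eta> powr \<gamma>" using z \<gamma> by (intro powr_mono2) auto
  moreover have "0 \<le> \<eta> powr (\<gamma> - 1) * z" using z by simp
  ultimately show ?thesis by linarith
next
  case False
  then have zp: "z > 0" using \<eta> by simp
  have "z powr \<gamma> = z powr (\<gamma> - 1) * z" using zp by (simp add: powr_add[symmetric] powr_diff)
  also have "\<dots> \<le> \<eta> powr (\<gamma> - 1) * z"
    using False \<eta> \<gamma> zp by (intro mult_right_mono powr_mono2') auto
  finally show ?thesis by (simp add: add_increasing)
qed

lemma add_powr_le:
  fixes x y \<beta> :: real
  assumes "0 \<le> x" "0 \<le> y" "0 < \<beta>" "\<beta> < 1"
  shows "(x + y) powr \<beta> \<le> 2 * (x powr \<beta> + y powr \<beta>)"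
proof -
  have "(x + y) powr \<beta> \<le> (2 * max x y) powr \<beta>" using assms by (intro powr_mono2) auto
  also have "\<dots> = 2 powr \<beta> * max x y powr \<beta>" using assms by (simp add: powr_mult)
  also have "\<dots> \<le> 2 * (x powr \<beta> + y powr \<beta>)"
  proof (rule mult_mono)
    show "2 powr \<beta> \<le> 2" using assms powr_mono[of \<beta> 1 2] by simp
    show "max x y powr \<beta> \<le> x powr \<beta> + y powr \<beta>" by (cases "x \<le> y") (auto simp: max_def)
  qed auto
  finally show ?thesis .
qed

context gamma_mixture
begin

definition "fH_pmf Hs = embed_pmf (fH \<kappa> Hs)"

lemma pmf_fH_pmf:
  assumes Hs: "prob_on L U Hs"
  shows "pmf (fH_pmf Hs) x = fH \<kappa> Hs x"
proof -
  have nn: "0 \<le> fH \<kappa> Hs x" for x using fH_bounds(3)[OF Hs \<kappa>_pos] less_imp_le by blast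
  have "(\<integral>\<^sup>+x. ennreal (fH \<kappa> Hs x) \<partial>count_space UNIV) = (\<Sum>x. ennreal (fH \<kappa> Hs x))"
    by (rule nn_integral_count_space_nat)
  also have "\<dots> = 1"
    using suminf_ennreal2[OF nn sums_summable[OF fH_sums[OF Hs \<kappa>_pos]]] sums_unique[OF fH_sums[OF Hs \<kappa>_pos]]
    by simp
  finally show ?thesis unfolding fH_pmf_def by (rule pmf_embed_pmf[OF nn])
qed

definition "C2 = D * ((1 - \<omega> ^ 4) powr (- \<kappa>) + 1 / (1 - \<omega> ^ 2)) / 2"

text \<open>By AM-GM, \<open>\<omega>\<^sup>-\<^sup>x \<surd>(nb_coeff x tL\<^sup>x) \<le> (nb_coeff x \<omega>\<^sup>4\<^sup>x + \<omega>\<^sup>2\<^sup>x) / 2\<close>, two summable series.\<close>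
lemma w_sqrt_fH_summable_le:
  assumes Hs: "prob_on L U Hs"
  shows "summable (\<lambda>x. w x * sqrt (fH \<kappa> Hs x))" "(\<Sum>x. w x * sqrt (fH \<kappa> Hs x)) \<le> C2"
proof -
  define g where "g x = D / 2 * (nb_coeff \<kappa> x * (\<omega> ^ 4) ^ x + (\<omega> ^ 2) ^ x)" for x
  have o4: "0 \<le> \<omega> ^ 4" "\<omega> ^ 4 < 1" "0 \<le> \<omega> ^ 2" "\<omega> ^ 2 < 1"
    using omega_bounds by (auto simp: power_less_one_iff)
  have gs: "g sums (D / 2 * ((1 - \<omega> ^ 4) powr (- \<kappa>) + 1 / (1 - \<omega> ^ 2)))"
    unfolding g_def by (intro sums_mult sums_add nb_coeff_sums[OF \<kappa>_pos] o4 geometric_sums) (use o4 in auto)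
  have pw: "norm (w x * sqrt (fH \<kappa> Hs x)) \<le> g x" for x
  proof -
    have c: "0 < nb_coeff \<kappa> x" by (rule nb_coeff_pos[OF \<kappa>_pos])
    have f: "0 < fH \<kappa> Hs x" "fH \<kappa> Hs x \<le> nb_coeff \<kappa> x * tL ^ x" using fH_bounds[OF Hs \<kappa>_pos, of x] by auto
    have "norm (w x * sqrt (fH \<kappa> Hs x)) = D * ((1 / \<omega>) ^ x * sqrt (fH \<kappa> Hs x))"
      using D_nonneg omega_bounds f by (simp add: w_def abs_mult)
    also have "\<dots> \<le> D * ((1 / \<omega>) ^ x * sqrt (nb_coeff \<kappa> x * tL ^ x))"
      using D_nonneg f omega_bounds by (intro mult_left_mono real_sqrt_le_mono) auto
    also have "(1 / \<omega>) ^ x * sqrt (nb_coeff \<kappa> x * tL ^ x) = sqrt ((nb_coeff \<kappa> x * (\<omega> ^ 4) ^ x) * (\<omega> ^ 2) ^ x)"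
    proof -
      have "((1 / \<omega>) ^ 2) ^ x = ((1 / \<omega>) ^ x) ^ 2" by (metis power_mult mult.commute)
      then have "(1 / \<omega>) ^ x = sqrt (((1 / \<omega>) ^ 2) ^ x)" using omega_bounds by simp
      moreover have "((1 / \<omega>) ^ 2) ^ x * (nb_coeff \<kappa> x * tL ^ x) = (nb_coeff \<kappa> x * (\<omega> ^ 4) ^ x) * (\<omega> ^ 2) ^ x"
      proof -
        have "((1 / \<omega>) ^ 2) * tL = \<omega> ^ 4 * \<omega> ^ 2"
          unfolding omega_bounds(3)[symmetric] using omega_bounds by (simp add: field_simps eval_nat_numeral)
        then have "((1 / \<omega>) ^ 2) ^ x * tL ^ x = (\<omega> ^ 4) ^ x * (\<omega> ^ 2) ^ x" by (metis power_mult_distrib)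
        then show ?thesis by (simp add: mult_ac)
      qed
      ultimately show ?thesis by (simp add: real_sqrt_mult[symmetric])
    qed
    also have "D * sqrt ((nb_coeff \<kappa> x * (\<omega> ^ 4) ^ x) * (\<omega> ^ 2) ^ x)
        \<le> D * ((nb_coeff \<kappa> x * (\<omega> ^ 4) ^ x + (\<omega> ^ 2) ^ x) / 2)"
      using D_nonneg c o4 by (intro mult_left_mono arith_geo_mean_sqrt) auto
    finally show ?thesis unfolding g_def by simp
  qed
  show s: "summable (\<lambda>x. w x * sqrt (fH \<kappa> Hs x))"
    by (rule summable_comparison_test'[OF sums_summable[OF gs] pw])
  have "(\<Sum>x. w x * sqrt (fH \<kappa> Hs x)) \<le> (\<Sum>x. g x)"
    by (rule suminf_le[OF _ s sums_summable[OF gs]]) (use pw in \<open>auto dest: abs_le_D1\<close>)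
  also have "\<dots> = C2" using sums_unique[OF gs] unfolding C2_def by simp
  finally show "(\<Sum>x. w x * sqrt (fH \<kappa> Hs x)) \<le> C2" .
qed

lemma expectation_weighted_dev_le:
  assumes Hs: "prob_on L U Hs" and n: "0 < n"
  shows "integrable (measure_pmf (replicate_pmf n (fH_pmf Hs))) (\<lambda>xs. weighted_dev xs Hs)"
    "measure_pmf.expectation (replicate_pmf n (fH_pmf Hs)) (\<lambda>xs. weighted_dev xs Hs) \<le> C2 / sqrt n"
proof -
  have pQ: "pmf (fH_pmf Hs) = fH \<kappa> Hs" using pmf_fH_pmf[OF Hs] by auto
  note E = expectation_weighted_empirical_dev_le[OF n w_nonneg, of "fH_pmf Hs", unfolded pQ,
      OF fH_bounds(3)[OF Hs \<kappa>_pos] summable_fH_mult_w[OF Hs] w_sqrt_fH_summable_le(1)[OF Hs],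
      folded weighted_dev_def]
  show "integrable (measure_pmf (replicate_pmf n (fH_pmf Hs))) (\<lambda>xs. weighted_dev xs Hs)"
    by (rule E(1))
  show "measure_pmf.expectation (replicate_pmf n (fH_pmf Hs)) (\<lambda>xs. weighted_dev xs Hs) \<le> C2 / sqrt n"
    using E(2) divide_right_mono[OF w_sqrt_fH_summable_le(2)[OF Hs], of "sqrt n"] by simp
qed

definition "c1 = K0 * (2 / L) powr \<kappa>"

lemma c1_pos: "0 < c1"
  unfolding c1_def using K0_pos L_pos by simp

lemma TV_npmle_le:
  assumes ne: "xs \<noteq> []" and np: "is_npmle \<kappa> L U xs Hh" and Hs: "prob_on L U Hs" and \<eta>: "0 < \<eta>"
  shows "TV (gH \<kappa> Hh) (gH \<kappa> Hs) \<le> c1 * ((2 * \<rho> ^ k / mk) powr \<beta>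
      * (\<eta> powr (\<beta> / 2) + \<eta> powr (\<beta> / 2 - 1) * weighted_dev xs Hs) + (2 * q ^ k / (1 - q)) powr \<beta>)"
proof -
  have Hh: "prob_on L U Hh" using np unfolding is_npmle_def by simp
  define z where "z = weighted_dev xs Hs"
  define A where "A = 2 * \<rho> ^ k / mk"
  define Y where "Y = 2 * q ^ k / (1 - q)"
  have z0: "0 \<le> z" unfolding z_def by (rule weighted_dev_nonneg[OF Hs])
  have A0: "0 \<le> A" unfolding A_def using radius_bounds mk_bounds by simp
  have Y0: "0 \<le> Y" unfolding Y_def using radius_bounds by simp
  define W where "W = A powr \<beta> * (\<eta> powr (\<beta> / 2) + \<eta> powr (\<beta> / 2 - 1) * z) + Y powr \<beta>"
  have "approx_error (2 * sqrt z) k powr \<beta> = (A * sqrt z + Y) powr \<beta>"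
    unfolding approx_error_def A_def Y_def by (simp add: mult_ac)
  also have "\<dots> \<le> 2 * ((A * sqrt z) powr \<beta> + Y powr \<beta>)"
    using A0 Y0 z0 beta_bounds by (intro add_powr_le) auto
  also have "(A * sqrt z) powr \<beta> = A powr \<beta> * z powr (\<beta> / 2)"
    using A0 z0 by (simp add: powr_mult powr_half_sqrt[symmetric] powr_powr)
  also have "\<dots> \<le> A powr \<beta> * (\<eta> powr (\<beta> / 2) + \<eta> powr (\<beta> / 2 - 1) * z)"
    using z0 \<eta> beta_bounds by (intro mult_left_mono powr_le_affine) auto
  finally have P: "approx_error (2 * sqrt z) k powr \<beta> \<le> 2 * W"
    unfolding W_def by simp
  have "TV (gH \<kappa> Hh) (gH \<kappa> Hs) \<le> 1/2 * c1 * approx_error (2 * sqrt z) k powr \<beta>"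
    unfolding c1_def z_def using TV_gH_le[OF Hh Hs npmle_fH_dev_le[OF ne np Hs]] by (simp add: mult_ac)
  also have "\<dots> \<le> 1/2 * c1 * (2 * W)"
    using P c1_pos by (intro mult_left_mono) auto
  also have "\<dots> = c1 * W" by simp
  finally show ?thesis unfolding W_def A_def Y_def z_def .
qed

lemma TV_nonneg: "0 \<le> TV g g'"
  unfolding TV_def set_lebesgue_integral_def
  by (intro mult_nonneg_nonneg Bochner_Integration.integral_nonneg) (auto simp: indicator_def)

lemma expect_TV_npmle_le:
  assumes Hs: "prob_on L U Hs" and n: "0 < n"
    and np: "\<forall>xs. length xs = n \<longrightarrow> is_npmle \<kappa> L U xs (Hhat xs)"
  shows "expect_data \<kappa> Hs n (\<lambda>xs. TV (gH \<kappa> (Hhat xs)) (gH \<kappa> Hs))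
    \<le> c1 * ((2 * \<rho> ^ k / mk) powr \<beta> * (1 + C2) * real n powr (- \<beta> / 4) + (2 * q ^ k / (1 - q)) powr \<beta>)"
proof -
  define \<eta> where "\<eta> = real n powr (-1/2)"
  define A where "A = (2 * \<rho> ^ k / mk) powr \<beta>"
  define Y where "Y = (2 * q ^ k / (1 - q)) powr \<beta>"
  define R where "R = replicate_pmf n (fH_pmf Hs)"
  define G where "G xs = c1 * (A * (\<eta> powr (\<beta> / 2) + \<eta> powr (\<beta> / 2 - 1) * weighted_dev xs Hs) + Y)" for xs
  note E = expectation_weighted_dev_le[OF Hs n, folded R_def]
  have "expect_data \<kappa> Hs n (\<lambda>xs. TV (gH \<kappa> (Hhat xs)) (gH \<kappa> Hs)) \<le> measure_pmf.expectation R G"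
    unfolding expect_data_def R_def pmf_fH_pmf[OF Hs, symmetric]
  proof (rule infsum_replicate_pmf_le_expectation)
    fix xs :: "nat list" assume l: "length xs = n"
    then have "xs \<noteq> []" using n by auto
    with np l show "0 \<le> TV (gH \<kappa> (Hhat xs)) (gH \<kappa> Hs) \<and> TV (gH \<kappa> (Hhat xs)) (gH \<kappa> Hs) \<le> G xs"
      unfolding G_def A_def Y_def \<eta>_def using TV_nonneg TV_npmle_le[OF _ _ Hs] n by simp
  qed (use E(1) in \<open>simp add: G_def[abs_def] R_def\<close>)
  also have "measure_pmf.expectation R G
      = c1 * (A * (\<eta> powr (\<beta> / 2) + \<eta> powr (\<beta> / 2 - 1) * measure_pmf.expectation R (\<lambda>xs. weighted_dev xs Hs)) + Y)"
    unfolding G_def using E(1) by (simp add: prob_space_measure_pmf)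
  also have "\<dots> \<le> c1 * (A * (\<eta> powr (\<beta> / 2) + \<eta> powr (\<beta> / 2 - 1) * (C2 / sqrt n)) + Y)"
    using E(2) c1_pos by (intro mult_left_mono add_mono add_left_mono) (auto simp: A_def)
  also have "\<eta> powr (\<beta> / 2 - 1) * (C2 / sqrt n) = C2 * real n powr (- \<beta> / 4)"
  proof -
    have sq: "sqrt (real n) = real n powr (1/2)" using n by (simp add: powr_half_sqrt)
    have "\<eta> powr (\<beta> / 2 - 1) / real n powr (1/2) = real n powr (- \<beta> / 4)"
      unfolding \<eta>_def using n by (simp add: powr_powr powr_diff[symmetric] algebra_simps)
    moreover have "\<eta> powr (\<beta> / 2 - 1) * (C2 / sqrt n) = C2 * (\<eta> powr (\<beta> / 2 - 1) / real n powr (1/2))"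
      unfolding sq by simp
    ultimately show ?thesis by simp
  qed
  also have "\<eta> powr (\<beta> / 2) = real n powr (- \<beta> / 4)" unfolding \<eta>_def using n by (simp add: powr_powr)
  finally show ?thesis unfolding A_def Y_def by (simp add: algebra_simps)
qed

text \<open>The Taylor order \<open>k \<approx> log n / (8 log \<rho>)\<close> balances the moment-inversion error \<open>\<rho>\<^sup>k\<close>
  against the Taylor remainder \<open>q\<^sup>k\<close>.\<close>
lemma taylor_order_choice:
  assumes n: "1 \<le> n"
  defines "k \<equiv> nat \<lfloor>ln (real n) / (8 * ln \<rho>)\<rfloor>"
  shows "(\<rho> ^ k) powr \<beta> \<le> real n powr (\<beta> / 8)"
    "(q ^ k) powr \<beta> \<le> q powr (- \<beta>) * real n powr (- rate_exponent)"
proof -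
  define t where "t = ln (real n) / (8 * ln \<rho>)"
  have lr: "0 < ln \<rho>" and lq: "ln q < 0" using radius_bounds by simp_all
  have t0: "0 \<le> t" unfolding t_def using n lr by simp
  have kt: "real k \<le> t" "t - 1 < real k" unfolding k_def t_def[symmetric] using t0 by linarith+
  have "(\<rho> ^ k) powr \<beta> = exp (\<beta> * (real k * ln \<rho>))"
    using radius_bounds by (simp add: powr_def ln_realpow)
  also have "\<dots> \<le> exp (\<beta> * (t * ln \<rho>))"
    using kt lr beta_bounds by (intro exp_le_cancel_iff[THEN iffD2] mult_left_mono mult_right_mono) auto
  also have "\<dots> = real n powr (\<beta> / 8)" unfolding t_def using lr n by (simp add: powr_def)
  finally show "(\<rho> ^ k) powr \<beta> \<le> real n powr (\<beta> / 8)" .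
  have "(q ^ k) powr \<beta> = exp (\<beta> * (real k * ln q))" using radius_bounds by (simp add: powr_def ln_realpow)
  also have "\<dots> \<le> exp (\<beta> * ((t - 1) * ln q))"
    using kt lq beta_bounds by (intro exp_le_cancel_iff[THEN iffD2] mult_left_mono mult_right_mono_neg) auto
  also have "\<dots> = q powr (- \<beta>) * real n powr (- (\<beta> * (- ln q) / (8 * ln \<rho>)))"
    unfolding t_def using lr radius_bounds n by (simp add: powr_def exp_add[symmetric] field_simps)
  also have "\<dots> \<le> q powr (- \<beta>) * real n powr (- rate_exponent)"
    using n rate_exponent_bounds by (intro mult_left_mono powr_mono) auto
  finally show "(q ^ k) powr \<beta> \<le> q powr (- \<beta>) * real n powr (- rate_exponent)" .
qed

definition "Cf = c1 * ((2 / mk) powr \<beta> * (1 + C2) + (2 / (1 - q)) powr \<beta> * q powr (- \<beta>))"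

lemma C2_nonneg: "0 \<le> C2"
proof -
  have "\<omega> ^ 2 < 1" using omega_bounds by (simp add: power_less_one_iff)
  then show ?thesis unfolding C2_def using D_nonneg by simp
qed

lemma Cf_pos: "0 < Cf"
  unfolding Cf_def using c1_pos C2_nonneg mk_bounds by (intro mult_pos_pos add_pos_nonneg) auto

lemma expect_TV_npmle_rate:
  assumes Hs: "prob_on L U Hs" and n: "1 \<le> n"
    and np: "\<forall>xs. length xs = n \<longrightarrow> is_npmle \<kappa> L U xs (Hhat xs)"
  shows "expect_data \<kappa> Hs n (\<lambda>xs. TV (gH \<kappa> (Hhat xs)) (gH \<kappa> Hs)) \<le> Cf * real n powr (- rate_exponent)"
proof -
  define k where "k = nat \<lfloor>ln (real n) / (8 * ln \<rho>)\<rfloor>"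
  note powers = taylor_order_choice[OF n, folded k_def]
  have "(2 * \<rho> ^ k / mk) powr \<beta> * (1 + C2) * real n powr (- \<beta> / 4)
      = (2 / mk) powr \<beta> * (1 + C2) * ((\<rho> ^ k) powr \<beta> * real n powr (- \<beta> / 4))"
    using radius_bounds mk_bounds by (simp add: powr_mult powr_divide)
  also have "\<dots> \<le> (2 / mk) powr \<beta> * (1 + C2) * (real n powr (\<beta> / 8) * real n powr (- \<beta> / 4))"
    using C2_nonneg powers(1) by (intro mult_left_mono mult_right_mono) auto
  also have "real n powr (\<beta> / 8) * real n powr (- \<beta> / 4) \<le> real n powr (- rate_exponent)"
    using n rate_exponent_bounds by (simp add: powr_add[symmetric] powr_mono)
  finally have first: "(2 * \<rho> ^ k / mk) powr \<beta> * (1 + C2) * real n powr (- \<beta> / 4)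
      \<le> (2 / mk) powr \<beta> * (1 + C2) * real n powr (- rate_exponent)"
    using C2_nonneg by (simp add: mult_left_mono)
  have "(2 * q ^ k / (1 - q)) powr \<beta> = (2 / (1 - q)) powr \<beta> * (q ^ k) powr \<beta>"
    using radius_bounds by (simp add: powr_mult powr_divide)
  also have "\<dots> \<le> (2 / (1 - q)) powr \<beta> * (q powr (- \<beta>) * real n powr (- rate_exponent))"
    using powers(2) by (intro mult_left_mono) auto
  finally have second: "(2 * q ^ k / (1 - q)) powr \<beta> \<le> (2 / (1 - q)) powr \<beta> * q powr (- \<beta>) * real n powr (- rate_exponent)"
    by (simp add: mult_ac)
  have "expect_data \<kappa> Hs n (\<lambda>xs. TV (gH \<kappa> (Hhat xs)) (gH \<kappa> Hs))
    \<le> c1 * ((2 * \<rho> ^ k / mk) powr \<beta> * (1 + C2) * real n powr (- \<beta> / 4) + (2 * q ^ k / (1 - q)) powr \<beta>)"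
    using expect_TV_npmle_le[OF Hs _ np] n by simp
  also have "\<dots> \<le> c1 * ((2 / mk) powr \<beta> * (1 + C2) * real n powr (- rate_exponent)
      + (2 / (1 - q)) powr \<beta> * q powr (- \<beta>) * real n powr (- rate_exponent))"
    using c1_pos first second by (intro mult_left_mono add_mono) auto
  also have "\<dots> = Cf * real n powr (- rate_exponent)" unfolding Cf_def by (simp add: algebra_simps)
  finally show ?thesis .
qed

text \<open>The argument gives the rate \<open>n\<^sup>-\<^sup>\<alpha>\<close> without a logarithmic factor; a factor
  \<open>(ln n)\<^sup>\<gamma>\<close> is absorbed into the constant because \<open>ln n \<ge> ln 2\<close>.\<close>
lemma expect_TV_npmle_log_rate:
  assumes Hs: "prob_on L U Hs" and n: "2 \<le> n" and \<gamma>: "0 \<le> \<gamma>"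
    and np: "\<forall>xs. length xs = n \<longrightarrow> is_npmle \<kappa> L U xs (Hhat xs)"
  shows "expect_data \<kappa> Hs n (\<lambda>xs. TV (gH \<kappa> (Hhat xs)) (gH \<kappa> Hs))
    \<le> Cf / ln 2 powr \<gamma> * real n powr - rate_exponent * ln (real n) powr \<gamma>"
proof -
  have "1 \<le> ln (real n) powr \<gamma> / ln 2 powr \<gamma>"
    using n \<gamma> by (simp add: powr_mono2)
  then have "Cf * 1 \<le> Cf * (ln (real n) powr \<gamma> / ln 2 powr \<gamma>)"
    using Cf_pos by (intro mult_left_mono) auto
  then have log_factor: "Cf \<le> Cf / ln 2 powr \<gamma> * ln (real n) powr \<gamma>" by simp
  have "expect_data \<kappa> Hs n (\<lambda>xs. TV (gH \<kappa> (Hhat xs)) (gH \<kappa> Hs)) \<le> Cf * real n powr - rate_exponent"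
    using expect_TV_npmle_rate[OF Hs _ np] n by simp
  also have "\<dots> \<le> Cf / ln 2 powr \<gamma> * ln (real n) powr \<gamma> * real n powr - rate_exponent"
    using log_factor by (intro mult_right_mono) auto
  finally show ?thesis by (simp add: mult_ac)
qed

end

theorem theorem3p3:
  fixes L U :: real
  assumes "0 < L" "L < U"
  shows "\<exists>\<alpha>::real. 0 < \<alpha> \<and> \<alpha> < 1/2 \<and>
    (\<forall>\<kappa>::real. \<kappa> > 0 \<longrightarrow> (\<exists>C::real. C > 0 \<and>
      (\<forall>(Hs::real measure) (n::nat) (Hhat::nat list \<Rightarrow> real measure).
         prob_on L U Hs \<longrightarrow> n \<ge> 2 \<longrightarrow>
         (\<forall>xs. length xs = n \<longrightarrow> is_npmle \<kappa> L U xs (Hhat xs)) \<longrightarrow>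
         expect_data \<kappa> Hs n (\<lambda>xs. TV (gH \<kappa> (Hhat xs)) (gH \<kappa> Hs))
           \<le> C * real n powr (-\<alpha>) * ln (real n) powr (max (1 - \<kappa>) 0 + \<alpha>))))"
proof -
  interpret support_interval L U using assms by unfold_locales
  show ?thesis
  proof (rule exI[of _ rate_exponent], intro conjI allI impI)
    show "0 < rate_exponent" "rate_exponent < 1/2" using rate_exponent_bounds by auto
    fix \<kappa> :: real assume "0 < \<kappa>"
    then interpret gamma_mixture L U \<kappa> by unfold_locales
    have "0 \<le> max (1 - \<kappa>) 0 + rate_exponent" using rate_exponent_bounds by simp
    with Cf_pos expect_TV_npmle_log_rate
    show "\<exists>C>0. \<forall>Hs n Hhat. prob_on L U Hs \<longrightarrow> 2 \<le> n \<longrightarrow>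
        (\<forall>xs. length xs = n \<longrightarrow> is_npmle \<kappa> L U xs (Hhat xs)) \<longrightarrow>
        expect_data \<kappa> Hs n (\<lambda>xs. TV (gH \<kappa> (Hhat xs)) (gH \<kappa> Hs))
          \<le> C * real n powr - rate_exponent * ln (real n) powr (max (1 - \<kappa>) 0 + rate_exponent)"
      by (intro exI[of _ "Cf / ln 2 powr (max (1 - \<kappa>) 0 + rate_exponent)"]) auto
  qed
qed

end
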